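(* Let $\Delta\ge3$ be an integer, and for a positive integer $d$, $K\in(0,1)$ and an angle $\phi$ let \[f(d,K,\phi)=\max\Big(2\sin(\phi/2),\ \sqrt{1+(1+K)^{-2d}-2\cos(\phi)(1+K)^{-d}}\Big).\] Suppose $k>\Delta$ is an integer and $0<\varepsilon<1$ are such that there exists $K\in(0,1)$ with $\theta:=\arcsin(K)\in\big(0,\frac{\pi}{3(\Delta-1+\varepsilon)}\big)$ satisfying, with $b:=\Delta-d$, \[\frac{(1+\varepsilon)^2(1+K)^d}{\cos((d+b\varepsilon)\theta/2)(k-b)-\varepsilon b(1+K)^d}\le K\quad\text{for } d=0,\dots,\Delta-2,\] \[\frac{(1+\varepsilon)(1+K)^d}{\cos((d+b\varepsilon)\theta/2)(k-b)-\varepsilon b(1+K)^d}\le \frac{K}{f(d,K,(d+b\varepsilon)\theta)}\quad\text{for } d=0,\dots,\Delta-1.\] Let $G=(V,E)$ be any graph of maximum degree at most $\Delta$ and $(w_e)_{e\in E}$ complex weights such that for each $e$ either (i) $|w_e|\le\varepsilon$, or (ii) $|\arg(w_e)|\le\varepsilon\theta$ and $\varepsilon<|w_e|\le1$. Then, with $\mathbf{Z}^W_L(G)$ the restricted partition function with $k$ colours and these weights: (A') For every list $W$ of distinct vertices forming a leaf-independent set and every colour list $L$ with $|L|=|W|$, $\mathbf{Z}^W_L(G)\ne0$. (B') For every list $W=W'u$ of distinct vertices forming a leaf-independent set and any colour lists $L'\ell$, $L'\ell'$ of length $|W|$: (i) the angle between $\mathbf{Z}^{W'u}_{L'\ell}(G)$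 and $\mathbf{Z}^{W'u}_{L'\ell'}(G)$ is at most $\theta$; (ii) $|\mathbf{Z}^{W'u}_{L'\ell}(G)|/|\mathbf{Z}^{W'u}_{L'\ell'}(G)|\le1+K$. (C') For every list $W=W'u$ of distinct vertices with $W'$ a leaf-independent set in $G$, and every colour list $L'$ of length $|W'|$: let $\mathcal{G},\mathcal{N}$ be the sets of good and neutral colours for $u$ with respect to $(G,W',L',\varepsilon)$, $d$ the number of free neighbours of $u$, $b=\Delta-d$, and $m(\ell)$ the number of fixed bad neighbours of $u$ with pre-assigned colour $\ell$. Then (i) $\mathbf{Z}^{W'u}_{L'\ell}(G)\ne0$ for all $\ell\in\mathcal{G}\cup\mathcal{N}$; (ii) for all $\ell,\ell'\in\mathcal{G}\cup\mathcal{N}$ the angle between $\mathbf{Z}^{W'u}_{L'\ell}(G)$ and $\mathbf{Z}^{W'u}_{L'\ell'}(G)$ is at most $(d+b\varepsilon)\theta$; (iii) for all $\ell\in[k]$ and $j\in\mathcal{G}$, $|\mathbf{Z}^{W'u}_{L'\ell}(G)|/|\mathbf{Z}^{W'u}_{L'j}(G)|\le\varepsilon^{m(\ell)}(1+K)^d$.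
   Context: Graphs are simple; $[k]=\{1,\dots,k\}$. For a graph $G=(V,E)$ with complex edge weights $(w_e)$, a list $W=w_1\dots w_m$ of distinct vertices and a list $L=\ell_1\dots\ell_m$ of colours in $[k]$, the restricted partition function is \[\mathbf{Z}^W_L(G)=\sum_{\phi:V\to[k],\ \phi(w_i)=\ell_i\ \forall i}\ \prod_{uv\in E,\ \phi(u)=\phi(v)} w_{uv}.\] $W'u$ and $L'\ell$ denote concatenation of lists. Vertices in $W$ are called fixed (with colour given by $L$); other vertices are free. A set $W\subseteq V$ is leaf-independent if it is an independent set and every vertex in $W$ has degree exactly $1$. Given $\varepsilon>0$, a neighbour $v$ of $u$ is a bad neighbour if $|w_{uv}|\le\varepsilon$. A colour $\ell$ is good for $u$ if no fixed neighbour of $u$ has colour $\ell$; bad if $u$ has at least one fixed bad neighbour coloured $\ell$; neutral if neither good nor bad. Angles between non-zero complex numbers are taken in $[0,\pi]$. *)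

theory Defs
  imports "HOL-Analysis.Analysis"
begin

definition simple_graph :: "'a set \<Rightarrow> ('a \<Rightarrow> 'a \<Rightarrow> bool) \<Rightarrow> bool" where
  "simple_graph V E \<longleftrightarrow> finite V \<and> (\<forall>u v. E u v \<longrightarrow> u \<in> V \<and> v \<in> V \<and> u \<noteq> v \<and> E v u)"

definition edges :: "'a set \<Rightarrow> ('a \<Rightarrow> 'a \<Rightarrow> bool) \<Rightarrow> 'a set set" where
  "edges V E = {{u, v} | u v. u \<in> V \<and> v \<in> V \<and> E u v}"

definition nbrs :: "'a set \<Rightarrow> ('a \<Rightarrow> 'a \<Rightarrow> bool) \<Rightarrow> 'a \<Rightarrow> 'a set" where
  "nbrs V E u = {v \<in> V. E u v}"

definition max_deg_le :: "'a set \<Rightarrow> ('a \<Rightarrow> 'a \<Rightarrow> bool) \<Rightarrow> nat \<Rightarrow> bool" where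
  "max_deg_le V E \<Delta> \<longleftrightarrow> (\<forall>v \<in> V. card (nbrs V E v) \<le> \<Delta>)"

definition leaf_independent :: "'a set \<Rightarrow> ('a \<Rightarrow> 'a \<Rightarrow> bool) \<Rightarrow> 'a set \<Rightarrow> bool" where
  "leaf_independent V E W \<longleftrightarrow>
     W \<subseteq> V \<and> (\<forall>u \<in> W. \<forall>v \<in> W. \<not> E u v) \<and> (\<forall>u \<in> W. card (nbrs V E u) = 1)"

definition Zr :: "'a set \<Rightarrow> ('a \<Rightarrow> 'a \<Rightarrow> bool) \<Rightarrow> ('a set \<Rightarrow> complex) \<Rightarrow> nat
                  \<Rightarrow> 'a list \<Rightarrow> nat list \<Rightarrow> complex" where
  "Zr V E w k W L =
     (\<Sum>\<phi> \<in> {\<phi> \<in> V \<rightarrow>\<^sub>E {1..k}. \<forall>i < length W. \<phi> (W ! i) = L ! i}.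
        \<Prod>e \<in> edges V E. if (\<forall>x \<in> e. \<forall>y \<in> e. \<phi> x = \<phi> y) then w e else 1)"

definition cangle :: "complex \<Rightarrow> complex \<Rightarrow> real" where
  "cangle z y = arccos (Re (z * cnj y) / (cmod z * cmod y))"

definition fcol :: "'a list \<Rightarrow> nat list \<Rightarrow> 'a \<Rightarrow> nat" where
  "fcol W L v = the (map_of (zip W L) v)"

definition good_cols :: "'a set \<Rightarrow> ('a \<Rightarrow> 'a \<Rightarrow> bool) \<Rightarrow> nat \<Rightarrow> 'a list \<Rightarrow> nat list \<Rightarrow> 'a \<Rightarrow> nat set" where
  "good_cols V E k W L u = {l \<in> {1..k}. \<forall>v \<in> set W. E u v \<longrightarrow> fcol W L v \<noteq> l}"

definition bad_cols :: "'a set \<Rightarrow> ('a \<Rightarrow> 'a \<Rightarrow> bool) \<Rightarrow> ('a set \<Rightarrow> complex) \<Rightarrow> real \<Rightarrow> nat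
                        \<Rightarrow> 'a list \<Rightarrow> nat list \<Rightarrow> 'a \<Rightarrow> nat set" where
  "bad_cols V E w \<epsilon> k W L u =
     {l \<in> {1..k}. \<exists>v \<in> set W. E u v \<and> cmod (w {u, v}) \<le> \<epsilon> \<and> fcol W L v = l}"

definition neutral_cols :: "'a set \<Rightarrow> ('a \<Rightarrow> 'a \<Rightarrow> bool) \<Rightarrow> ('a set \<Rightarrow> complex) \<Rightarrow> real \<Rightarrow> nat
                        \<Rightarrow> 'a list \<Rightarrow> nat list \<Rightarrow> 'a \<Rightarrow> nat set" where
  "neutral_cols V E w \<epsilon> k W L u = {1..k} - good_cols V E k W L u - bad_cols V E w \<epsilon> k W L u"

definition mbad :: "'a set \<Rightarrow> ('a \<Rightarrow> 'a \<Rightarrow> bool) \<Rightarrow> ('a set \<Rightarrow> complex) \<Rightarrow> real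
                    \<Rightarrow> 'a list \<Rightarrow> nat list \<Rightarrow> 'a \<Rightarrow> nat \<Rightarrow> nat" where
  "mbad V E w \<epsilon> W L u l =
     card {v \<in> set W. E u v \<and> cmod (w {u, v}) \<le> \<epsilon> \<and> fcol W L v = l}"

definition free_deg :: "'a set \<Rightarrow> ('a \<Rightarrow> 'a \<Rightarrow> bool) \<Rightarrow> 'a list \<Rightarrow> 'a \<Rightarrow> nat" where
  "free_deg V E W u = card {v \<in> V. E u v \<and> v \<notin> set W}"

definition fbound :: "nat \<Rightarrow> real \<Rightarrow> real \<Rightarrow> real" where
  "fbound d K \<phi> = max (2 * sin (\<phi> / 2))
      (sqrt (1 + 1 / (1 + K) ^ (2 * d) - 2 * cos \<phi> / (1 + K) ^ d))"

end

theory Submission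
  imports Defs
begin

text \<open>The three statements are proved together by induction on the number of vertices, for a
  generalised partition function in which every fixed leaf is replaced by a pendant factor on its
  neighbour v, contributing its edge weight exactly when v receives the leaf's colour.
  Expanding over the colour l of a vertex u writes Z as the sum over l of P l * Y l, where P l is
  the product of the pendant weights of colour l at u and Y l is the partition function of G - u
  in which every neighbour of u carries a pendant of colour l. By induction, recolouring one
  pendant changes a partition function by a relative error of at most K, i.e. by a factor of
  modulus at most 1 + K and argument at most \<theta> = arcsin K; recolouring the d neighbours of u one
  by one shows that the Y l lie in a cone of opening d \<theta> and have moduli within a factor
  (1 + K)^d. The terms of the colours that are not bad then lie in a cone of opening (d + b \<epsilon>) \<theta>,
  which gives the lower bound |Z| \<ge> min |Y| * denominator, while by the two hypotheses on K a
  recolouring of a pendant at u changes Z by at most K * min |Y| * denominator. This closes the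
  induction; pinning the leaves of W recovers the restricted partition function.\<close>

section \<open>Plane geometry of complex numbers\<close>

lemma cmod_rcis_diff_squared:
  "(cmod (rcis r1 a1 - rcis r2 a2))\<^sup>2 = r1\<^sup>2 + r2\<^sup>2 - 2 * r1 * r2 * cos (a1 - a2)"
  using cmod_diff_squared[of r1 a1 r2 a2] by (simp add: rcis_def cis_conv_exp)

lemma cmod_rcis_diff_le_if_angle_le_pi3:
  assumes "0 \<le> r1" "0 \<le> r2" "r1 \<le> R" "r2 \<le> R" "\<bar>a1 - a2\<bar> \<le> pi / 3"
  shows "cmod (rcis r1 a1 - rcis r2 a2) \<le> R"
proof -
  have "cos (pi / 3) \<le> cos \<bar>a1 - a2\<bar>"
    by (rule cos_monotone_0_pi_le) (use assms(5) in auto)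
  hence "1 / 2 \<le> cos (a1 - a2)" by (simp add: cos_60)
  hence "(cmod (rcis r1 a1 - rcis r2 a2))\<^sup>2 \<le> r1\<^sup>2 + r2\<^sup>2 - r1 * r2"
    using mult_left_mono[of "1/2" "cos (a1 - a2)" "2 * r1 * r2"] assms(1,2)
    by (simp add: cmod_rcis_diff_squared)
  also have "\<dots> \<le> R\<^sup>2"
    using assms(1-4) by (smt (verit) mult_mono power2_eq_square)
  finally show ?thesis
    using assms by (meson power2_le_imp_le order_trans)
qed

lemma quadratic_le_max_endpoints:
  fixes a b c t :: real
  assumes "a \<le> t" "t \<le> b"
  shows "t\<^sup>2 + c * t \<le> max (a\<^sup>2 + c * a) (b\<^sup>2 + c * b)"
proof -
  have "(t - a) * (b - t) \<ge> 0" using assms by simp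
  hence "t\<^sup>2 + c * t \<le> (a + b + c) * t - a * b" by (simp add: power2_eq_square algebra_simps)
  also have "\<dots> \<le> max ((a + b + c) * a - a * b) ((a + b + c) * b - a * b)"
    using assms by (cases "a + b + c \<ge> 0") (auto intro: mult_left_mono mult_left_mono_neg
        simp: le_max_iff_disj)
  finally show ?thesis by (simp add: power2_eq_square algebra_simps)
qed

lemma cmod_rcis_diff_le_chord_bound:
  assumes r0: "0 < r0" "r0 \<le> 1" and r: "0 < r2" "r0 * r2 \<le> r1" "r1 \<le> r2"
    and angle: "\<bar>a1 - a2\<bar> \<le> \<phi>" "\<phi> \<le> pi"
  shows "cmod (rcis r1 a1 - rcis r2 a2)
           \<le> r2 * max (2 * sin (\<phi> / 2)) (sqrt (1 + r0\<^sup>2 - 2 * r0 * cos \<phi>))"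
proof -
  define t where "t = r1 / r2"
  define h where "h x = 1 + x\<^sup>2 - 2 * x * cos \<phi>" for x
  define M where "M = max (2 * sin (\<phi> / 2)) (sqrt (1 + r0\<^sup>2 - 2 * r0 * cos \<phi>))"
  have t: "r0 \<le> t" "t \<le> 1" using r by (auto simp: t_def field_simps)
  have "cos \<phi> \<le> cos \<bar>a1 - a2\<bar>"
    by (rule cos_monotone_0_pi_le) (use angle in auto)
  hence "1 + t\<^sup>2 - 2 * t * cos (a1 - a2) \<le> h t"
    using t r0 mult_left_mono[of "cos \<phi>" "cos (a1 - a2)" "2 * t"] by (simp add: h_def)
  moreover have "(cmod (rcis r1 a1 - rcis r2 a2))\<^sup>2 = r2\<^sup>2 * (1 + t\<^sup>2 - 2 * t * cos (a1 - a2))"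
    using r unfolding cmod_rcis_diff_squared by (simp add: t_def power2_eq_square field_simps)
  ultimately have "(cmod (rcis r1 a1 - rcis r2 a2))\<^sup>2 \<le> r2\<^sup>2 * h t"
    by (simp add: mult_left_mono)
  also have "h t \<le> max (h r0) (h 1)"
    using quadratic_le_max_endpoints[OF t, of "- 2 * cos \<phi>"] unfolding h_def by (auto simp: max_def algebra_simps)
  also have "max (h r0) (h 1) \<le> M\<^sup>2"
  proof -
    have hr0: "0 \<le> h r0"
    proof -
      have "2 * r0 * cos \<phi> \<le> 2 * r0" using r0 by simp
      moreover have "0 \<le> (1 - r0)\<^sup>2" by simp
      ultimately show ?thesis by (simp add: h_def power2_eq_square algebra_simps)
    qed
    hence "h r0 = (sqrt (1 + r0\<^sup>2 - 2 * r0 * cos \<phi>))\<^sup>2" by (simp add: h_def)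
    also have "\<dots> \<le> M\<^sup>2" using hr0 by (intro power_mono) (auto simp: M_def h_def)
    finally have "h r0 \<le> M\<^sup>2" .
    moreover have "h 1 = (2 * sin (\<phi> / 2))\<^sup>2"
      using cos_double_sin[of "\<phi> / 2"] by (simp add: h_def power2_eq_square)
    moreover have "(2 * sin (\<phi> / 2))\<^sup>2 \<le> M\<^sup>2"
      using sin_ge_zero[of "\<phi> / 2"] angle by (intro power_mono) (auto simp: M_def)
    ultimately show ?thesis by simp
  qed
  finally have "(cmod (rcis r1 a1 - rcis r2 a2))\<^sup>2 \<le> (r2 * M)\<^sup>2"
    using r by (simp add: power_mult_distrib mult_left_mono)
  moreover have "0 \<le> M" using sin_ge_zero[of "\<phi> / 2"] angle by (simp add: M_def le_max_iff_disj)
  ultimately show ?thesis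
    using r power2_le_imp_le unfolding M_def by (metis mult_nonneg_nonneg less_imp_le)
qed

lemma cmod_rcis_diff_le_chord_bound_sym:
  assumes r0: "0 < r0" "r0 \<le> 1" and r: "0 < r1" "0 < r2" "r0 * r2 \<le> r1" "r0 * r1 \<le> r2" "r1 \<le> R" "r2 \<le> R"
    and angle: "\<bar>a1 - a2\<bar> \<le> \<phi>" "\<phi> \<le> pi"
  shows "cmod (rcis r1 a1 - rcis r2 a2)
           \<le> R * max (2 * sin (\<phi> / 2)) (sqrt (1 + r0\<^sup>2 - 2 * r0 * cos \<phi>))"
proof -
  define M where "M = max (2 * sin (\<phi> / 2)) (sqrt (1 + r0\<^sup>2 - 2 * r0 * cos \<phi>))"
  have "0 \<le> M" using sin_ge_zero[of "\<phi> / 2"] angle by (simp add: M_def le_max_iff_disj)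
  have "cmod (rcis r1 a1 - rcis r2 a2) \<le> max r1 r2 * M"
  proof (cases "r1 \<le> r2")
    case True
    thus ?thesis using cmod_rcis_diff_le_chord_bound[OF r0 r(2,3) True angle] by (simp add: M_def)
  next
    case False
    have "\<bar>a2 - a1\<bar> \<le> \<phi>" using angle by linarith
    thus ?thesis using cmod_rcis_diff_le_chord_bound[OF r0 r(1,4) _ _ angle(2), of a2 a1] False
      by (simp add: M_def norm_minus_commute)
  qed
  also have "\<dots> \<le> R * M" using r \<open>0 \<le> M\<close> by (intro mult_right_mono) auto
  finally show ?thesis by (simp add: M_def)
qed

lemma cos_half_mul_sum_le_cmod_sum_rcis:
  assumes "finite I" "\<And>i. i \<in> I \<Longrightarrow> 0 \<le> r i"
    and "\<And>i j. i \<in> I \<Longrightarrow> j \<in> I \<Longrightarrow> \<bar>a i - a j\<bar> \<le> \<beta>" "\<beta> \<le> pi"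
  shows "cos (\<beta> / 2) * (\<Sum>i\<in>I. r i) \<le> cmod (\<Sum>i\<in>I. rcis (r i) (a i))"
proof (cases "I = {}")
  case True thus ?thesis by simp
next
  case False
  define M where "M = Max (a ` I)"
  define m where "m = Min (a ` I)"
  define A where "A = (M + m) / 2"
  have "M \<in> a ` I" "m \<in> a ` I"
    unfolding M_def m_def using assms(1) False by (intro Max_in Min_in; auto)+
  then obtain iM im where "iM \<in> I" "a iM = M" "im \<in> I" "a im = m" by auto
  hence "M - m \<le> \<beta>" using assms(3) by fastforce
  have cos_le: "cos (\<beta> / 2) \<le> cos (a i - A)" if "i \<in> I" for i
  proof -
    have "m \<le> a i" "a i \<le> M" using that assms(1) by (auto simp: M_def m_def)
    hence "\<bar>a i - A\<bar> \<le> \<beta> / 2" using \<open>M - m \<le> \<beta>\<close> by (simp add: A_def abs_le_iff field_simps)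
    hence "cos (\<beta> / 2) \<le> cos \<bar>a i - A\<bar>"
      using assms(4) abs_ge_zero[of "a i - A"] by (intro cos_monotone_0_pi_le) linarith+
    thus ?thesis by simp
  qed
  \<comment> \<open>project onto the bisector of the sector containing all summands\<close>
  have "cos (\<beta> / 2) * (\<Sum>i\<in>I. r i) \<le> (\<Sum>i\<in>I. r i * cos (a i - A))"
    unfolding sum_distrib_left by (intro sum_mono) (use cos_le assms(2) in \<open>auto simp: mult.commute mult_left_mono\<close>)
  also have "\<dots> = Re ((\<Sum>i\<in>I. rcis (r i) (a i)) * cis (- A))"
    by (simp add: sum_distrib_right Re_sum rcis_def cis_mult[symmetric] mult.assoc) (simp add: cos_diff)
  also have "\<dots> \<le> cmod (\<Sum>i\<in>I. rcis (r i) (a i))"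
    using complex_Re_le_cmod by (metis norm_cis norm_mult mult.right_neutral)
  finally show ?thesis .
qed

lemma cangle_rcis:
  assumes "0 < r1" "0 < r2" "\<bar>a1 - a2\<bar> \<le> pi"
  shows "cangle (rcis r1 a1) (rcis r2 a2) = \<bar>a1 - a2\<bar>"
proof -
  have "rcis r1 a1 * cnj (rcis r2 a2) = rcis (r1 * r2) (a1 - a2)"
    by (simp add: rcis_def cis_cnj cis_mult[symmetric] algebra_simps)
       (metis cis_cnj cis_mult diff_conv_add_uminus mult.commute)
  thus ?thesis using assms by (simp add: cangle_def Re_rcis arccos_cos_eq_abs)
qed

lemma cis_eq_imp_diff_multiple_2pi:
  assumes "cis a = cis b" obtains m :: int where "a = b + 2 * pi * m"
  using assms sin_cos_eq_iff by (metis cis.sel)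

lemma near_one_polar_bounds:
  assumes K: "0 < K" "K < 1" and q: "cmod (q - 1) \<le> K"
  shows "q \<noteq> 0" "\<bar>Arg q\<bar> \<le> arcsin K" "cmod q \<le> 1 + K"
proof -
  show "cmod q \<le> 1 + K" using q norm_triangle_sub[of q 1] by simp
  have "Re q \<ge> 1 - K" using q abs_Re_le_cmod[of "q - 1"] by auto
  hence re: "Re q > 0" using K by simp
  thus q0: "q \<noteq> 0" by auto
  have "(Re q - 1)\<^sup>2 + (Im q)\<^sup>2 \<le> K\<^sup>2"
    using power_mono[OF q norm_ge_zero, of 2] by (simp add: cmod_power2)
  \<comment> \<open>the disc of radius K about 1 lies in the sector of half-angle arcsin K\<close>
  hence "(Im q)\<^sup>2 * (1 - K\<^sup>2) \<le> (K\<^sup>2 - (Re q - 1)\<^sup>2) * (1 - K\<^sup>2)"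
    using K by (intro mult_right_mono) (auto simp: power_le_one)
  also have "\<dots> \<le> K\<^sup>2 * (Re q)\<^sup>2"
    using zero_le_power2[of "Re q - 1 + K\<^sup>2"] by (simp add: power2_eq_square algebra_simps)
  finally have "(Im q)\<^sup>2 * (1 - K\<^sup>2) \<le> K\<^sup>2 * (Re q)\<^sup>2" .
  hence "(Im q)\<^sup>2 \<le> K\<^sup>2 * (cmod q)\<^sup>2" by (simp add: cmod_power2 algebra_simps)
  moreover have "Im q = cmod q * sin (Arg q)" by (metis Im_rcis rcis_cmod_Arg)
  ultimately have "(sin (Arg q))\<^sup>2 \<le> K\<^sup>2"
    using q0 by (simp add: power_mult_distrib mult.commute)
  hence "sin \<bar>Arg q\<bar> \<le> K"
    using K power2_le_imp_le[of "\<bar>sin (Arg q)\<bar>" K] by (cases "Arg q < 0") auto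
  have "Re q = cmod q * cos (Arg q)" by (metis Re_rcis rcis_cmod_Arg)
  hence "0 < cos \<bar>Arg q\<bar>" using re q0 by (simp add: zero_less_mult_iff)
  hence "\<bar>Arg q\<bar> < pi / 2"
    using Arg_bounded[of q] cos_monotone_0_pi_le[of "pi / 2" "\<bar>Arg q\<bar>"] by fastforce
  hence "\<bar>Arg q\<bar> = arcsin (sin \<bar>Arg q\<bar>)" by (simp add: arcsin_sin)
  also have "\<dots> \<le> arcsin K"
    using \<open>sin \<bar>Arg q\<bar> \<le> K\<close> K by (intro arcsin_le_arcsin) auto
  finally show "\<bar>Arg q\<bar> \<le> arcsin K" .
qed

lemma relative_error_polar:
  assumes K: "0 < K" "K < 1" and "z' \<noteq> 0" and close: "cmod (z - z') \<le> K * cmod z'"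
  obtains \<rho> \<sigma> where "z = z' * rcis \<rho> \<sigma>" "0 < \<rho>" "\<rho> \<le> 1 + K" "\<bar>\<sigma>\<bar> \<le> arcsin K"
proof -
  define q where "q = z / z'"
  have "cmod (q - 1) = cmod (z - z') / cmod z'"
    using \<open>z' \<noteq> 0\<close> by (simp add: q_def norm_divide[symmetric] diff_divide_distrib)
  also have "\<dots> \<le> K" using close \<open>z' \<noteq> 0\<close> by (simp add: divide_le_eq mult.commute)
  finally have "cmod (q - 1) \<le> K" .
  from near_one_polar_bounds[OF K this] have "z = z' * rcis (cmod q) (Arg q)" "0 < cmod q"
    "cmod q \<le> 1 + K" "\<bar>Arg q\<bar> \<le> arcsin K"
    using \<open>z' \<noteq> 0\<close> by (auto simp: rcis_cmod_Arg q_def)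
  thus thesis by (rule that)
qed

lemma relative_error_chain:
  assumes K: "0 < K" "K < 1" and "finite S"
    and step: "\<And>a F. a \<in> S \<Longrightarrow> a \<notin> F \<Longrightarrow> Z F \<noteq> 0 \<and> cmod (Z (insert a F) - Z F) \<le> K * cmod (Z F)"
  obtains \<rho> \<sigma> where "Z S = Z {} * rcis \<rho> \<sigma>" "0 < \<rho>" "\<rho> \<le> (1 + K) ^ card S"
    "\<bar>\<sigma>\<bar> \<le> real (card S) * arcsin K"
proof -
  have "\<exists>\<rho> \<sigma>. Z F = Z {} * rcis \<rho> \<sigma> \<and> 0 < \<rho> \<and> \<rho> \<le> (1 + K) ^ card F \<and> \<bar>\<sigma>\<bar> \<le> real (card F) * arcsin K"
    if "F \<subseteq> S" for F
    using finite_subset[OF that \<open>finite S\<close>] that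
  proof (induction F rule: finite_induct)
    case empty
    show ?case by (intro exI[of _ 1] exI[of _ 0]) (simp add: rcis_def)
  next
    case (insert a F)
    then obtain \<rho> \<sigma> where rs: "Z F = Z {} * rcis \<rho> \<sigma>" "0 < \<rho>" "\<rho> \<le> (1 + K) ^ card F"
      "\<bar>\<sigma>\<bar> \<le> real (card F) * arcsin K" by auto
    obtain \<rho>' \<sigma>' where q: "Z (insert a F) = Z F * rcis \<rho>' \<sigma>'" "0 < \<rho>'" "\<rho>' \<le> 1 + K"
      "\<bar>\<sigma>'\<bar> \<le> arcsin K"
      using step[of a F] insert relative_error_polar[OF K] by blast
    have "Z (insert a F) = Z {} * rcis (\<rho> * \<rho>') (\<sigma> + \<sigma>')"
      using q(1) rs(1) by (simp add: rcis_mult mult.assoc)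
    moreover have "\<rho> * \<rho>' \<le> (1 + K) ^ card F * (1 + K)" using rs q K by (intro mult_mono) auto
    moreover have "\<bar>\<sigma> + \<sigma>'\<bar> \<le> real (card F) * arcsin K + arcsin K" using rs(4) q(4) by linarith
    ultimately show ?case using insert rs(2) q(2)
      by (intro exI[of _ "\<rho> * \<rho>'"] exI[of _ "\<sigma> + \<sigma>'"]) (simp add: algebra_simps)
  qed
  thus thesis using that by blast
qed

lemma common_phases:
  fixes Y :: "'c \<Rightarrow> complex"
  assumes c0: "c0 \<in> C" and nz: "\<forall>l\<in>C. Y l \<noteq> 0"
    and rel: "\<forall>l\<in>C. \<forall>l'\<in>C. \<exists>\<rho> \<sigma>. Y l = Y l' * rcis \<rho> \<sigma> \<and> 0 < \<rho> \<and> \<bar>\<sigma>\<bar> \<le> D"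
    and D: "D < pi / 2"
  obtains \<psi> where "\<And>l. l \<in> C \<Longrightarrow> Y l = rcis (cmod (Y l)) (\<psi> l)"
    and "\<And>l l'. l \<in> C \<Longrightarrow> l' \<in> C \<Longrightarrow> \<bar>\<psi> l - \<psi> l'\<bar> \<le> D"
proof -
  have "\<forall>l\<in>C. \<exists>\<rho> \<sigma>. Y l = Y c0 * rcis \<rho> \<sigma> \<and> 0 < \<rho> \<and> \<bar>\<sigma>\<bar> \<le> D" using rel c0 by blast
  then obtain \<rho>0 \<sigma>0 where rs: "\<And>l. l \<in> C \<Longrightarrow> Y l = Y c0 * rcis (\<rho>0 l) (\<sigma>0 l) \<and> 0 < \<rho>0 l \<and> \<bar>\<sigma>0 l\<bar> \<le> D"
    by metis
  define \<psi> where "\<psi> l = Arg (Y c0) + \<sigma>0 l" for l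
  have rep: "Y l = rcis (cmod (Y l)) (\<psi> l)" if "l \<in> C" for l
  proof -
    have "Y l = rcis (cmod (Y c0) * \<rho>0 l) (\<psi> l)"
      using rs[OF that] by (metis rcis_cmod_Arg rcis_mult \<psi>_def)
    moreover from this have "cmod (Y l) = cmod (Y c0) * \<rho>0 l" using rs[OF that] by simp
    ultimately show ?thesis by simp
  qed
  \<comment> \<open>the phases are only determined modulo 2 pi; the spread 3 D < 2 pi rules out any wrap-around\<close>
  have "\<bar>\<psi> l - \<psi> l'\<bar> \<le> D" if lC: "l \<in> C" "l' \<in> C" for l l'
  proof -
    obtain \<rho> \<sigma> where r: "Y l = Y l' * rcis \<rho> \<sigma>" "0 < \<rho>" "\<bar>\<sigma>\<bar> \<le> D" using rel lC by blast
    have "Y l = rcis (cmod (Y l') * \<rho>) (\<psi> l' + \<sigma>)"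
      using rep[OF lC(2)] r(1) by (metis rcis_mult)
    moreover have "cmod (Y l) = cmod (Y l') * \<rho>" using r by (simp add: norm_mult)
    ultimately have "rcis (cmod (Y l)) (\<psi> l) = rcis (cmod (Y l)) (\<psi> l' + \<sigma>)"
      using rep[OF lC(1)] by simp
    hence "cis (\<psi> l) = cis (\<psi> l' + \<sigma>)" using nz lC by (simp add: rcis_def)
    then obtain m :: int where m: "\<psi> l = \<psi> l' + \<sigma> + 2 * pi * m"
      by (rule cis_eq_imp_diff_multiple_2pi)
    have "\<bar>\<psi> l - \<psi> l'\<bar> \<le> 2 * D" using rs[OF lC(1)] rs[OF lC(2)] unfolding \<psi>_def by linarith
    hence "\<bar>2 * pi * m\<bar> \<le> 3 * D" using m r(3) by (simp add: abs_le_iff)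
    hence "\<bar>2 * pi * m\<bar> < 2 * pi" using D by simp
    hence "m = 0" by (simp add: abs_mult)
    thus ?thesis using m r(3) by simp
  qed
  with rep show thesis by (rule that)
qed

section \<open>Elementary real inequalities\<close>

lemma power_le_chord:
  fixes y :: real assumes "1 \<le> y" "d \<le> n" "0 < n"
  shows "y ^ d \<le> 1 + (real d / real n) * (y ^ n - 1)"
proof -
  define t where "t = real d / real n"
  have t: "0 \<le> t" "t \<le> 1" using assms by (auto simp: t_def)
  have "y ^ d = exp ((1 - t) *\<^sub>R 0 + t *\<^sub>R (real n * ln y))"
    using assms by (simp add: t_def exp_of_nat_mult)
  also have "\<dots> \<le> (1 - t) * exp 0 + t * exp (real n * ln y)"
    by (rule convex_onD[OF exp_convex t]) auto
  also have "exp (real n * ln y) = y ^ n" using assms by (simp add: exp_of_nat_mult)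
  finally show ?thesis by (simp add: t_def algebra_simps diff_divide_distrib)
qed

lemma scaled_power_lt:
  fixes y :: real assumes y: "1 < y" "y ^ n \<le> 3" and d: "d \<le> n" and n: "0 < n"
  shows "real (n + 1 - d) * y ^ d < real d + real n + y ^ n"
proof (cases "d = 0")
  case True
  thus ?thesis using y n by (simp add: one_less_power)
next
  case False
  have "real (n + 1 - d) * y ^ d \<le> real (n + 1 - d) * (1 + (real d / real n) * (y ^ n - 1))"
    using power_le_chord[of y d n] y d n by (intro mult_left_mono) auto
  also have "\<dots> = real (n + 1 - d) + (y ^ n - 1) * real d * (real (n + 1 - d) / real n)"
    using n by (simp add: field_simps)
  also have "\<dots> \<le> real (n + 1 - d) + 2 * real d"
  proof -
    have "real (n + 1 - d) / real n \<le> 1" using False d n by (simp add: divide_simps)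
    moreover have "0 \<le> (y ^ n - 1) * real d" using y by (simp add: one_le_power)
    ultimately have "(y ^ n - 1) * real d * (real (n + 1 - d) / real n) \<le> (y ^ n - 1) * real d"
      by (rule mult_left_le)
    also have "\<dots> \<le> 2 * real d" using y by (intro mult_right_mono) auto
    finally show ?thesis by simp
  qed
  also have "\<dots> < real d + real n + y ^ n"
    using y n d by (simp add: one_less_power of_nat_diff)
  finally show ?thesis .
qed

lemma card_image_set_mset_le_size: "card (f ` set_mset M) \<le> size M"
proof (induction M)
  case (add x M)
  thus ?case by (simp add: card_insert_if le_SucI)
qed simp

lemma card_le_size_if_subset_fst:
  "A \<subseteq> fst ` set_mset Q \<Longrightarrow> card A \<le> size Q"
  using card_mono[of "fst ` set_mset Q" A] card_image_set_mset_le_size[of fst Q] by simp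

lemma norm_prod_mset_le_one:
  fixes M :: "complex multiset"
  assumes "\<forall>z\<in>#M. cmod z \<le> 1" shows "cmod (prod_mset M) \<le> 1"
  using assms by (induction M) (auto simp: norm_mult mult_le_one)

lemma norm_prod_mset_le_member:
  fixes M :: "complex multiset"
  assumes "\<forall>z\<in>#M. cmod z \<le> 1" "z0 \<in># M"
  shows "cmod (prod_mset M) \<le> cmod z0"
proof -
  obtain M' where M: "M = add_mset z0 M'" using assms(2) by (metis multi_member_split)
  have "cmod (prod_mset M') \<le> 1" using assms(1) M by (intro norm_prod_mset_le_one) auto
  thus ?thesis using M by (simp add: norm_mult mult_left_le)
qed

lemma prod_mset_polar:
  fixes M :: "complex multiset"
  assumes "\<forall>z\<in>#M. z \<noteq> 0 \<and> \<bar>Arg z\<bar> \<le> a"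
  obtains t where "prod_mset M = rcis (cmod (prod_mset M)) t" "\<bar>t\<bar> \<le> real (size M) * a"
    "prod_mset M \<noteq> 0"
proof -
  have "\<exists>t. prod_mset M = rcis (cmod (prod_mset M)) t \<and> \<bar>t\<bar> \<le> real (size M) * a \<and> prod_mset M \<noteq> 0"
    using assms
  proof (induction M)
    case empty thus ?case by (intro exI[of _ 0]) (simp add: rcis_def)
  next
    case (add z M)
    then obtain t where t: "prod_mset M = rcis (cmod (prod_mset M)) t" "\<bar>t\<bar> \<le> real (size M) * a"
      "prod_mset M \<noteq> 0" by auto
    have z: "z \<noteq> 0" "\<bar>Arg z\<bar> \<le> a" using add by auto
    have "prod_mset (add_mset z M) = rcis (cmod (prod_mset (add_mset z M))) (Arg z + t)"
      using t(1) by (metis norm_mult prod_mset.add_mset rcis_cmod_Arg rcis_mult)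
    thus ?case using z t by (intro exI[of _ "Arg z + t"]) (auto simp: algebra_simps)
  qed
  thus thesis using that by blast
qed

lemma norm_prod_if_le_eps_power:
  fixes z :: "'b \<Rightarrow> complex"
  assumes "finite A" "\<forall>x\<in>A. cmod (z x) \<le> 1" "0 \<le> \<epsilon>"
  shows "cmod (\<Prod>x\<in>A. if l = c x then z x else 1) \<le> \<epsilon> ^ card {x\<in>A. c x = l \<and> cmod (z x) \<le> \<epsilon>}"
proof -
  define B where "B = {x\<in>A. c x = l \<and> cmod (z x) \<le> \<epsilon>}"
  have "cmod (\<Prod>x\<in>A. if l = c x then z x else 1) = (\<Prod>x\<in>A. cmod (if l = c x then z x else 1))"
    by (simp add: prod_norm)
  also have "\<dots> \<le> (\<Prod>x\<in>A. if x \<in> B then \<epsilon> else 1)"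
    using assms(2) by (intro prod_mono) (auto simp: B_def)
  also have "\<dots> = \<epsilon> ^ card B"
  proof -
    have "A \<inter> {x. x \<in> B} = B" by (auto simp: B_def)
    thus ?thesis using assms(1) by (simp add: prod.If_cases)
  qed
  finally show ?thesis by (simp add: B_def)
qed

lemma sum_update_one:
  fixes g :: "nat \<Rightarrow> complex"
  assumes "finite C" "b \<in> C"
  shows "(\<Sum>l\<in>C. (if l = b then x else 1) * g l) = (\<Sum>l\<in>C. g l) + (x - 1) * g b"
proof -
  have "(\<Sum>l\<in>C. (if l = b then x else 1) * g l) = (\<Sum>l\<in>C. g l + (if l = b then (x - 1) * g l else 0))"
    by (rule sum.cong) (auto simp: algebra_simps)
  thus ?thesis using assms by (simp add: sum.distrib)
qed

section \<open>Partition functions with pendant factors\<close>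

text \<open>A pendant (v, c, x) records a removed neighbour of v that is pinned to colour c and joined
  to v by an edge of weight x; it contributes the factor x exactly when v receives colour c.\<close>

definition pendant_factor :: "('a \<Rightarrow> nat) \<Rightarrow> 'a \<times> nat \<times> complex \<Rightarrow> complex" where
  "pendant_factor \<phi> p = (if \<phi> (fst p) = fst (snd p) then snd (snd p) else 1)"

definition pendant_prod :: "('a \<times> nat \<times> complex) multiset \<Rightarrow> ('a \<Rightarrow> nat) \<Rightarrow> complex" where
  "pendant_prod P \<phi> = prod_mset (image_mset (pendant_factor \<phi>) P)"

definition edge_prod :: "'a set \<Rightarrow> ('a \<Rightarrow> 'a \<Rightarrow> bool) \<Rightarrow> ('a set \<Rightarrow> complex) \<Rightarrow> ('a \<Rightarrow> nat) \<Rightarrow> complex" where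
  "edge_prod V E w \<phi> = (\<Prod>e\<in>edges V E. if (\<forall>x\<in>e. \<forall>y\<in>e. \<phi> x = \<phi> y) then w e else 1)"

definition Zpin :: "'a set \<Rightarrow> ('a \<Rightarrow> 'a \<Rightarrow> bool) \<Rightarrow> ('a set \<Rightarrow> complex) \<Rightarrow> nat
    \<Rightarrow> ('a \<times> nat \<times> complex) multiset \<Rightarrow> 'a set \<Rightarrow> ('a \<Rightarrow> nat) \<Rightarrow> complex" where
  "Zpin V E w k P U c =
     (\<Sum>\<phi>\<in>{\<phi> \<in> V \<rightarrow>\<^sub>E {1..k}. \<forall>x\<in>U. \<phi> x = c x}. edge_prod V E w \<phi> * pendant_prod P \<phi>)"

definition pendants_from :: "'a set \<Rightarrow> ('a \<Rightarrow> 'a \<Rightarrow> bool) \<Rightarrow> ('a set \<Rightarrow> complex) \<Rightarrow> 'a set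
    \<Rightarrow> ('a \<Rightarrow> nat) \<Rightarrow> ('a \<times> nat \<times> complex) multiset" where
  "pendants_from V E w F c =
     image_mset (\<lambda>(x, v). (v, c x, w {x, v})) (mset_set {(x, v). x \<in> F \<and> v \<in> V \<and> E x v})"

definition pendants_around :: "('a set \<Rightarrow> complex) \<Rightarrow> 'a \<Rightarrow> ('a \<Rightarrow> nat) \<Rightarrow> 'a set
    \<Rightarrow> ('a \<times> nat \<times> complex) multiset" where
  "pendants_around w u c N = image_mset (\<lambda>v. (v, c v, w {u, v})) (mset_set N)"

definition pendant_deg :: "('a \<times> nat \<times> complex) multiset \<Rightarrow> 'a \<Rightarrow> nat" where
  "pendant_deg P v = size (filter_mset (\<lambda>p. fst p = v) P)"

definition pendants_at :: "('a \<times> nat \<times> complex) multiset \<Rightarrow> 'a \<Rightarrow> (nat \<times> complex) multiset" where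
  "pendants_at P u = image_mset snd (filter_mset (\<lambda>p. fst p = u) P)"

lemma pendant_prod_union: "pendant_prod (A + B) \<phi> = pendant_prod A \<phi> * pendant_prod B \<phi>"
  by (simp add: pendant_prod_def)

lemma pendant_prod_cong:
  "(\<And>p. p \<in># P \<Longrightarrow> \<phi> (fst p) = \<psi> (fst p)) \<Longrightarrow> pendant_prod P \<phi> = pendant_prod P \<psi>"
  unfolding pendant_prod_def pendant_factor_def
  by (intro arg_cong[where f = prod_mset] image_mset_cong) auto

lemma edge_prod_cong:
  "(\<And>x. x \<in> V \<Longrightarrow> \<phi> x = \<psi> x) \<Longrightarrow> edge_prod V E w \<phi> = edge_prod V E w \<psi>"
  unfolding edge_prod_def by (intro prod.cong) (auto simp: edges_def)

lemma Zpin_cong: "(\<And>x. x \<in> U \<Longrightarrow> c x = c' x) \<Longrightarrow> Zpin V E w k P U c = Zpin V E w k P U c'"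
  unfolding Zpin_def by (metis (no_types, lifting))

lemma Zr_eq_Zpin:
  assumes "distinct W" "length L = length W"
  shows "Zr V E w k W L = Zpin V E w k {#} (set W) (fcol W L)"
proof -
  have "fcol W L (W ! i) = L ! i" if "i < length W" for i
    using map_of_zip_nth[of W L i] assms that by (simp add: fcol_def)
  hence "(\<forall>i<length W. \<phi> (W ! i) = L ! i) \<longleftrightarrow> (\<forall>x\<in>set W. \<phi> x = fcol W L x)" for \<phi> :: "'a \<Rightarrow> nat"
    by (metis in_set_conv_nth)
  thus ?thesis unfolding Zr_def Zpin_def edge_prod_def pendant_prod_def by simp
qed

lemma Zpin_sum_colours:
  assumes "finite V" "u \<in> V" "u \<notin> U"
  shows "Zpin V E w k P U c = (\<Sum>l\<in>{1..k}. Zpin V E w k P (insert u U) (c(u := l)))"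
proof -
  define S where "S = {\<phi> \<in> V \<rightarrow>\<^sub>E {1..k}. \<forall>x\<in>U. \<phi> x = c x}"
  have "finite S" unfolding S_def
    by (rule finite_subset[OF _ finite_PiE[of V "\<lambda>_. {1..k}"]]) (use assms(1) in auto)
  moreover have "(\<lambda>\<phi>. \<phi> u) ` S \<subseteq> {1..k}" using assms(2) by (auto simp: S_def)
  moreover have "{\<phi> \<in> S. \<phi> u = l} = {\<phi> \<in> V \<rightarrow>\<^sub>E {1..k}. \<forall>x\<in>insert u U. \<phi> x = (c(u := l)) x}" for l
    using assms(3) by (auto simp: S_def)
  ultimately show ?thesis
    unfolding Zpin_def S_def[symmetric]
    using sum.group[of S "{1..k}" "\<lambda>\<phi>. \<phi> u" "\<lambda>\<phi>. edge_prod V E w \<phi> * pendant_prod P \<phi>"] by simp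
qed

lemma edges_remove_independent:
  assumes "F \<subseteq> V" "\<forall>x y. E x y \<longrightarrow> E y x"
  shows "edges V E = edges (V - F) E \<union> (\<lambda>(x, v). {x, v}) ` {(x, v). x \<in> F \<and> v \<in> V \<and> E x v}"
  using assms by (auto simp: edges_def) blast+

lemma edge_prod_remove_independent:
  assumes fin: "finite V" and FV: "F \<subseteq> V" and indep: "\<forall>x\<in>F. \<forall>y\<in>F. \<not> E x y"
    and sym: "\<forall>x y. E x y \<longrightarrow> E y x"
  shows "edge_prod V E w \<phi> = edge_prod (V - F) E w \<phi> * pendant_prod (pendants_from V E w F \<phi>) \<phi>"
proof -
  define Pairs where "Pairs = {(x, v). x \<in> F \<and> v \<in> V \<and> E x v}"
  define g where "g e = (if (\<forall>x\<in>e. \<forall>y\<in>e. \<phi> x = \<phi> y) then w e else 1)" for e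
  have "finite Pairs" unfolding Pairs_def
    by (rule finite_subset[of _ "V \<times> V"]) (use fin FV in auto)
  moreover have "finite (edges (V - F) E)"
    by (rule finite_subset[of _ "Pow (V - F)"]) (use fin in \<open>auto simp: edges_def\<close>)
  moreover have "edges (V - F) E \<inter> (\<lambda>(x, v). {x, v}) ` Pairs = {}"
    by (auto simp: edges_def Pairs_def doubleton_eq_iff)
  moreover have "inj_on (\<lambda>(x, v). {x, v}) Pairs"
    using indep by (auto intro!: inj_onI simp: Pairs_def doubleton_eq_iff)
  ultimately have "edge_prod V E w \<phi> = prod g (edges (V - F) E) * (\<Prod>(x, v)\<in>Pairs. g {x, v})"
    unfolding edge_prod_def g_def[symmetric] edges_remove_independent[OF FV sym, folded Pairs_def]
    by (simp add: prod.union_disjoint prod.reindex case_prod_unfold)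
  also have "(\<Prod>(x, v)\<in>Pairs. g {x, v}) = pendant_prod (pendants_from V E w F \<phi>) \<phi>"
    unfolding pendant_prod_def pendants_from_def Pairs_def[symmetric] prod_unfold_prod_mset
    by (auto simp: g_def pendant_factor_def multiset.map_comp comp_def case_prod_unfold
        intro!: arg_cong[where f = prod_mset] image_mset_cong)
  finally show ?thesis by (simp add: edge_prod_def g_def)
qed

lemma finite_pendant_pairs:
  "finite V \<Longrightarrow> F \<subseteq> V \<Longrightarrow> finite {(x, v). x \<in> F \<and> v \<in> V \<and> E x v}"
  by (rule finite_subset[of _ "V \<times> V"]) auto

lemma mem_pendants_from:
  assumes "finite V" "F \<subseteq> V"
  shows "p \<in># pendants_from V E w F c \<longleftrightarrow> (\<exists>x v. x \<in> F \<and> v \<in> V \<and> E x v \<and> p = (v, c x, w {x, v}))"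
  using finite_pendant_pairs[OF assms] by (auto simp: pendants_from_def)

lemma pendants_from_cong:
  "(\<And>x. x \<in> F \<Longrightarrow> c x = c' x) \<Longrightarrow> pendants_from V E w F c = pendants_from V E w F c'"
  unfolding pendants_from_def
  by (cases "finite {(x, v). x \<in> F \<and> v \<in> V \<and> E x v}") (auto intro!: image_mset_cong)

lemma restrict_bij_betw_pinned:
  assumes FV: "F \<subseteq> V" and FU: "F \<subseteq> U" and col: "\<forall>x\<in>F. c x \<in> {1..k}"
  shows "bij_betw (\<lambda>\<phi>. restrict \<phi> (V - F))
           {\<phi> \<in> V \<rightarrow>\<^sub>E {1..k}. \<forall>x\<in>U. \<phi> x = c x} {\<psi> \<in> (V - F) \<rightarrow>\<^sub>E {1..k}. \<forall>x\<in>U - F. \<psi> x = c x}"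
proof (rule bij_betw_imageI)
  show "inj_on (\<lambda>\<phi>. restrict \<phi> (V - F)) {\<phi> \<in> V \<rightarrow>\<^sub>E {1..k}. \<forall>x\<in>U. \<phi> x = c x}"
  proof (rule inj_onI, rule ext)
    fix \<phi>1 \<phi>2 x
    assume "\<phi>1 \<in> {\<phi> \<in> V \<rightarrow>\<^sub>E {1..k}. \<forall>x\<in>U. \<phi> x = c x}" "\<phi>2 \<in> {\<phi> \<in> V \<rightarrow>\<^sub>E {1..k}. \<forall>x\<in>U. \<phi> x = c x}"
      and "restrict \<phi>1 (V - F) = restrict \<phi>2 (V - F)"
    thus "\<phi>1 x = \<phi>2 x" using FU
      by (cases "x \<in> V"; cases "x \<in> F") (auto simp: PiE_def extensional_def restrict_def fun_eq_iff, metis)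
  qed
  show "(\<lambda>\<phi>. restrict \<phi> (V - F)) ` {\<phi> \<in> V \<rightarrow>\<^sub>E {1..k}. \<forall>x\<in>U. \<phi> x = c x}
      = {\<psi> \<in> (V - F) \<rightarrow>\<^sub>E {1..k}. \<forall>x\<in>U - F. \<psi> x = c x}"
  proof (intro equalityI subsetI)
    fix \<psi> assume \<psi>: "\<psi> \<in> {\<psi> \<in> (V - F) \<rightarrow>\<^sub>E {1..k}. \<forall>x\<in>U - F. \<psi> x = c x}"
    define \<phi> where "\<phi> x = (if x \<in> F then c x else \<psi> x)" for x
    have "\<phi> \<in> {\<phi> \<in> V \<rightarrow>\<^sub>E {1..k}. \<forall>x\<in>U. \<phi> x = c x}"
      using \<psi> col FV by (auto simp: \<phi>_def PiE_def Pi_def extensional_def)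
    moreover have "restrict \<phi> (V - F) = \<psi>"
      using \<psi> by (auto simp: \<phi>_def PiE_def extensional_def fun_eq_iff)
    ultimately show "\<psi> \<in> (\<lambda>\<phi>. restrict \<phi> (V - F)) ` {\<phi> \<in> V \<rightarrow>\<^sub>E {1..k}. \<forall>x\<in>U. \<phi> x = c x}"
      by blast
  qed (force simp: PiE_def Pi_def extensional_def)
qed

lemma Zpin_remove_independent:
  assumes fin: "finite V" and FV: "F \<subseteq> V" and FU: "F \<subseteq> U"
    and indep: "\<forall>x\<in>F. \<forall>y\<in>F. \<not> E x y" and sym: "\<forall>x y. E x y \<longrightarrow> E y x"
    and col: "\<forall>x\<in>F. c x \<in> {1..k}" and Pin: "\<forall>p\<in>#P. fst p \<in> V"
  shows "Zpin V E w k P U c = pendant_prod (filter_mset (\<lambda>p. fst p \<in> F) P) c *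
           Zpin (V - F) E w k (filter_mset (\<lambda>p. fst p \<notin> F) P + pendants_from V E w F c) (U - F) c"
proof -
  define h where "h \<phi> = restrict \<phi> (V - F)" for \<phi> :: "'a \<Rightarrow> nat"
  define c0 where "c0 = pendant_prod (filter_mset (\<lambda>p. fst p \<in> F) P) c"
  define P' where "P' = filter_mset (\<lambda>p. fst p \<notin> F) P + pendants_from V E w F c"
  have factor: "edge_prod V E w \<phi> * pendant_prod P \<phi> = c0 * (edge_prod (V - F) E w (h \<phi>) * pendant_prod P' (h \<phi>))"
    if \<phi>F: "\<forall>x\<in>F. \<phi> x = c x" for \<phi>
  proof -
    have hV: "\<phi> x = h \<phi> x" if "x \<in> V" "x \<notin> F" for x using that by (simp add: h_def)
    have "pendant_prod P \<phi> = pendant_prod (filter_mset (\<lambda>p. fst p \<in> F) P) \<phi> *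
        pendant_prod (filter_mset (\<lambda>p. fst p \<notin> F) P) \<phi>"
      by (metis multiset_partition pendant_prod_union)
    also have "\<dots> = c0 * pendant_prod (filter_mset (\<lambda>p. fst p \<notin> F) P) (h \<phi>)"
      unfolding c0_def using \<phi>F Pin hV by (intro arg_cong2[where f = "(*)"] pendant_prod_cong) auto
    finally have "pendant_prod P \<phi> = \<dots>" .
    moreover have "edge_prod V E w \<phi> = edge_prod (V - F) E w (h \<phi>) *
        pendant_prod (pendants_from V E w F c) (h \<phi>)"
    proof -
      have "pendants_from V E w F \<phi> = pendants_from V E w F c"
        using \<phi>F by (intro pendants_from_cong) auto
      moreover have "pendant_prod (pendants_from V E w F c) \<phi> = pendant_prod (pendants_from V E w F c) (h \<phi>)"
        using indep hV by (intro pendant_prod_cong) (fastforce simp: mem_pendants_from[OF fin FV])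
      moreover have "edge_prod (V - F) E w \<phi> = edge_prod (V - F) E w (h \<phi>)"
        using hV by (intro edge_prod_cong) auto
      ultimately show ?thesis by (simp add: edge_prod_remove_independent[OF fin FV indep sym])
    qed
    ultimately show ?thesis by (simp add: P'_def pendant_prod_union)
  qed
  have "Zpin V E w k P U c
      = (\<Sum>\<phi>\<in>{\<phi> \<in> V \<rightarrow>\<^sub>E {1..k}. \<forall>x\<in>U. \<phi> x = c x}. c0 * (edge_prod (V - F) E w (h \<phi>) * pendant_prod P' (h \<phi>)))"
    unfolding Zpin_def using FU by (intro sum.cong refl factor) auto
  also have "\<dots> = c0 * Zpin (V - F) E w k P' (U - F) c"
    unfolding Zpin_def sum_distrib_left[symmetric] h_def
    by (rule arg_cong[where f = "(*) c0"], rule sum.reindex_bij_betw[OF restrict_bij_betw_pinned[OF FV FU col]])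
  finally show ?thesis by (simp add: c0_def P'_def)
qed

definition colour_prod :: "(nat \<times> complex) multiset \<Rightarrow> nat \<Rightarrow> complex" where
  "colour_prod Q l = prod_mset (image_mset (\<lambda>q. if l = fst q then snd q else 1) Q)"

definition colour_count :: "(nat \<times> complex) multiset \<Rightarrow> nat \<Rightarrow> nat" where
  "colour_count Q l = size (filter_mset (\<lambda>q. fst q = l) Q)"

lemma colour_prod_eq_prod_mset_filter:
  "colour_prod Q l = prod_mset (image_mset snd (filter_mset (\<lambda>q. fst q = l) Q))"
  unfolding colour_prod_def by (induction Q) auto

lemma colour_prod_absent: "\<forall>q\<in>#Q. fst q \<noteq> l \<Longrightarrow> colour_prod Q l = 1"
  unfolding colour_prod_def by (induction Q) auto

lemma colour_prod_add_mset:
  "colour_prod (add_mset (c, x) Q) l = (if l = c then x else 1) * colour_prod Q l"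
  by (simp add: colour_prod_def)

lemma colour_prod_image_mset_set:
  assumes "finite A"
  shows "colour_prod (image_mset (\<lambda>x. (c x, z x)) (mset_set A)) l = (\<Prod>x\<in>A. if l = c x then z x else 1)"
proof -
  have "(\<lambda>q. if l = fst q then snd q else 1) \<circ> (\<lambda>x. (c x, z x)) = (\<lambda>x. if l = c x then z x else 1)"
    by auto
  thus ?thesis unfolding colour_prod_def multiset.map_comp by (simp add: prod_unfold_prod_mset)
qed

lemma colour_count_add_le:
  assumes "l \<noteq> l'" shows "colour_count Q l + colour_count Q l' \<le> size Q"
proof -
  have "colour_count Q l + colour_count Q l' = size (filter_mset (\<lambda>q. fst q = l \<or> fst q = l') Q)"
    unfolding colour_count_def using assms by (induction Q) auto
  thus ?thesis by (metis size_filter_mset_lesseq)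
qed

lemma pendant_prod_pinned_at:
  "pendant_prod (filter_mset (\<lambda>p. fst p = u) P) (\<lambda>_. l) = colour_prod (pendants_at P u) l"
  unfolding pendant_prod_def colour_prod_def pendants_at_def pendant_factor_def
  by (induction P) auto

lemma pendant_deg_union: "pendant_deg (A + B) v = pendant_deg A v + pendant_deg B v"
  by (simp add: pendant_deg_def)

lemma pendant_deg_filter: "v \<noteq> u \<Longrightarrow> pendant_deg (filter_mset (\<lambda>p. fst p \<noteq> u) P) v = pendant_deg P v"
  unfolding pendant_deg_def filter_filter_mset by (metis (mono_tags, lifting) filter_mset_cong)

lemma size_pendants_at: "size (pendants_at P u) = pendant_deg P u"
  by (simp add: pendants_at_def pendant_deg_def)

lemma pendants_around_cong:
  "(\<And>v. v \<in> N \<Longrightarrow> c v = c' v) \<Longrightarrow> pendants_around w u c N = pendants_around w u c' N"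
  unfolding pendants_around_def by (cases "finite N") (auto intro!: image_mset_cong)

lemma pendants_around_remove:
  "finite N \<Longrightarrow> a \<in> N \<Longrightarrow> pendants_around w u c N = add_mset (a, c a, w {u, a}) (pendants_around w u c (N - {a}))"
  unfolding pendants_around_def by (simp add: mset_set.remove)

lemma pendant_deg_around:
  assumes "finite N" shows "pendant_deg (pendants_around w u c N) v = (if v \<in> N then 1 else 0)"
proof -
  have "pendant_deg (pendants_around w u c N) v = card {x\<in>N. x = v}"
    unfolding pendant_deg_def pendants_around_def filter_mset_image_mset
    using assms by (simp add: filter_mset_mset_set)
  also have "{x\<in>N. x = v} = (if v \<in> N then {v} else {})" by auto
  finally show ?thesis by simp
qed

lemma pendants_from_singleton:
  assumes "finite V"
  shows "pendants_from V E w {u} c = pendants_around w u (\<lambda>_. c u) (nbrs V E u)"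
proof -
  have "{(x, v). x \<in> {u} \<and> v \<in> V \<and> E x v} = Pair u ` nbrs V E u" by (auto simp: nbrs_def)
  thus ?thesis unfolding pendants_from_def pendants_around_def
    by (simp add: image_mset_mset_set[symmetric] inj_on_def multiset.map_comp comp_def)
qed

lemma pendants_from_insert:
  assumes "finite V" "F \<subseteq> V" "u \<notin> F" "nbrs V E u = {v}"
  shows "pendants_from V E w (insert u F) c = pendants_from V E w F c + {#(v, c u, w {u, v})#}"
proof -
  have "{(x, y). x \<in> insert u F \<and> y \<in> V \<and> E x y} = insert (u, v) {(x, y). x \<in> F \<and> y \<in> V \<and> E x y}"
    using assms(4) by (auto simp: nbrs_def)
  thus ?thesis unfolding pendants_from_def
    using finite_pendant_pairs[OF assms(1,2), of E] assms(3) by simp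
qed

lemma pendants_at_pendants_from:
  assumes "finite V" "F \<subseteq> V" "u \<in> V"
  shows "pendants_at (pendants_from V E w F c) u = image_mset (\<lambda>x. (c x, w {x, u})) (mset_set {x\<in>F. E x u})"
proof -
  have "{p \<in> {(x, v). x \<in> F \<and> v \<in> V \<and> E x v}. snd p = u} = (\<lambda>x. (x, u)) ` {x\<in>F. E x u}"
    using assms(3) by auto
  moreover have "inj_on (\<lambda>x. (x, u)) {x\<in>F. E x u}" by (auto intro: inj_onI)
  ultimately have "mset_set {p \<in> {(x, v). x \<in> F \<and> v \<in> V \<and> E x v}. snd p = u}
      = image_mset (\<lambda>x. (x, u)) (mset_set {x\<in>F. E x u})"
    by (simp add: image_mset_mset_set)
  thus ?thesis
    unfolding pendants_at_def pendants_from_def filter_mset_image_mset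
    using finite_pendant_pairs[OF assms(1,2), of E]
    by (simp add: filter_mset_mset_set case_prod_beta multiset.map_comp comp_def)
qed

lemma fcol_in_set:
  assumes "distinct W" "length L = length W" "x \<in> set W"
  shows "fcol W L x \<in> set L"
proof -
  obtain i where i: "i < length W" "W ! i = x" using assms(3) by (auto simp: in_set_conv_nth)
  hence "fcol W L x = L ! i" using map_of_zip_nth[of W L i] assms by (simp add: fcol_def)
  thus ?thesis using i assms(2) by simp
qed

lemma fcol_snoc:
  assumes "length L' = length W'" "u \<notin> set W'"
  shows "x \<in> set W' \<Longrightarrow> fcol (W' @ [u]) (L' @ [l]) x = fcol W' L' x"
    and "fcol (W' @ [u]) (L' @ [l]) u = l"
proof -
  have z: "map_of (zip (W' @ [u]) (L' @ [l])) = map_of [(u, l)] ++ map_of (zip W' L')"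
    using assms(1) by (simp add: zip_append map_of_append)
  have "dom (map_of (zip W' L')) = set W'" using assms(1) by (simp add: dom_map_of_zip)
  thus "x \<in> set W' \<Longrightarrow> fcol (W' @ [u]) (L' @ [l]) x = fcol W' L' x"
    and "fcol (W' @ [u]) (L' @ [l]) u = l"
    using assms(2) unfolding fcol_def z by (auto simp: map_add_dom_app_simps)
qed

lemma degree_sum_remove_vertex:
  assumes fin: "finite V" and sym: "\<forall>x y. E x y \<longrightarrow> E y x" and u: "u \<in> V" and v: "v \<in> V" "v \<noteq> u"
  shows "card (nbrs (V - {u}) E v) + pendant_deg (filter_mset (\<lambda>p. fst p \<noteq> u) P + pendants_around w u c (nbrs V E u)) v
       = card (nbrs V E v) + pendant_deg P v"
proof -
  have fv: "finite (nbrs V E v)" and fu: "finite (nbrs V E u)" using fin by (auto simp: nbrs_def)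
  have nb: "nbrs (V - {u}) E v = nbrs V E v - {u}" by (auto simp: nbrs_def)
  have pd: "pendant_deg (filter_mset (\<lambda>p. fst p \<noteq> u) P + pendants_around w u c (nbrs V E u)) v
      = pendant_deg P v + (if v \<in> nbrs V E u then 1 else 0)"
    using v fu by (simp add: pendant_deg_union pendant_deg_filter pendant_deg_around)
  show ?thesis
  proof (cases "v \<in> nbrs V E u")
    case True
    hence "u \<in> nbrs V E v" using sym u v by (auto simp: nbrs_def)
    hence "card (nbrs V E v - {u}) + 1 = card (nbrs V E v)"
      using card.remove[OF fv] by simp
    thus ?thesis unfolding nb pd using True by simp
  next
    case False
    hence "u \<notin> nbrs V E v" using sym v by (auto simp: nbrs_def)
    thus ?thesis unfolding nb pd using False by simp
  qed
qed

lemma pendant_deg_pendants_from: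
  assumes fin: "finite V" and FV: "F \<subseteq> V" and sym: "\<forall>x y. E x y \<longrightarrow> E y x" and v: "v \<in> V"
  shows "pendant_deg (pendants_from V E w F c) v = card (nbrs V E v \<inter> F)"
proof -
  have "{p \<in> {(x, y). x \<in> F \<and> y \<in> V \<and> E x y}. snd p = v} = (\<lambda>x. (x, v)) ` (nbrs V E v \<inter> F)"
    using sym FV v by (auto simp: nbrs_def)
  moreover have "inj_on (\<lambda>x. (x, v)) (nbrs V E v \<inter> F)" by (auto intro: inj_onI)
  ultimately show ?thesis
    unfolding pendant_deg_def pendants_from_def filter_mset_image_mset
    using finite_pendant_pairs[OF fin FV, of E]
    by (simp add: filter_mset_mset_set case_prod_beta card_image)
qed

lemma good_cols_eq_absent:
  assumes sym: "\<forall>x y. E x y \<longrightarrow> E y x" and fin: "finite V" and FV: "set W \<subseteq> V" and u: "u \<in> V"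
  shows "good_cols V E k W L u = {l \<in> {1..k}. \<forall>q\<in>#pendants_at (pendants_from V E w (set W) (fcol W L)) u. fst q \<noteq> l}"
  using sym finite_subset[OF FV fin]
  by (auto simp: good_cols_def pendants_at_pendants_from[OF fin FV u])

lemma bad_cols_eq_small:
  assumes sym: "\<forall>x y. E x y \<longrightarrow> E y x" and fin: "finite V" and FV: "set W \<subseteq> V" and u: "u \<in> V"
  shows "bad_cols V E w \<epsilon> k W L u = {l \<in> {1..k}.
           \<exists>q\<in>#pendants_at (pendants_from V E w (set W) (fcol W L)) u. fst q = l \<and> cmod (snd q) \<le> \<epsilon>}"
  using sym finite_subset[OF FV fin]
  by (auto simp: bad_cols_def pendants_at_pendants_from[OF fin FV u] insert_commute)

lemma fcol_in_colours:
  "distinct W \<Longrightarrow> length L = length W \<Longrightarrow> set L \<subseteq> {1..k} \<Longrightarrow> \<forall>x\<in>set W. fcol W L x \<in> {1..k}"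
  using fcol_in_set by (metis subsetD)

section \<open>Consequences of the hypotheses on the parameters\<close>

locale zero_free_parameters =
  fixes \<Delta> k :: nat and \<epsilon> K \<theta> :: real
  assumes Delta: "\<Delta> \<ge> 3"
    and k_gt: "k > \<Delta>"
    and eps: "0 < \<epsilon>" "\<epsilon> < 1"
    and K: "0 < K" "K < 1"
    and theta_def: "\<theta> = arcsin K"
    and theta_range: "0 < \<theta>" "\<theta> < pi / (3 * (real \<Delta> - 1 + \<epsilon>))"
    and cond1: "\<And>d. d \<le> \<Delta> - 2 \<Longrightarrow>
        (let b = real \<Delta> - real d;
             den = cos ((real d + b * \<epsilon>) * \<theta> / 2) * (real k - b) - \<epsilon> * b * (1 + K) ^ d
         in den \<noteq> 0 \<and> (1 + \<epsilon>)\<^sup>2 * (1 + K) ^ d / den \<le> K)"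
    and cond2: "\<And>d. d \<le> \<Delta> - 1 \<Longrightarrow>
        (let b = real \<Delta> - real d;
             den = cos ((real d + b * \<epsilon>) * \<theta> / 2) * (real k - b) - \<epsilon> * b * (1 + K) ^ d
         in den \<noteq> 0 \<and> fbound d K ((real d + b * \<epsilon>) * \<theta>) \<noteq> 0 \<and>
            (1 + \<epsilon>) * (1 + K) ^ d / den \<le> K / fbound d K ((real d + b * \<epsilon>) * \<theta>))"
begin

definition cone_angle :: "nat \<Rightarrow> real" where
  "cone_angle d = (real d + (real \<Delta> - real d) * \<epsilon>) * \<theta>"

definition denom :: "nat \<Rightarrow> real" where
  "denom d = cos (cone_angle d / 2) * (real k - (real \<Delta> - real d)) - \<epsilon> * (real \<Delta> - real d) * (1 + K) ^ d"

lemma cond1_denom: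
  "d \<le> \<Delta> - 2 \<Longrightarrow> (1 + \<epsilon>)\<^sup>2 * (1 + K) ^ d / denom d \<le> K"
  using cond1[of d] by (simp add: Let_def denom_def cone_angle_def)

lemma cond2_denom:
  "d \<le> \<Delta> - 1 \<Longrightarrow> fbound d K (cone_angle d) \<noteq> 0 \<and>
     (1 + \<epsilon>) * (1 + K) ^ d / denom d \<le> K / fbound d K (cone_angle d)"
  using cond2[of d] by (simp add: Let_def denom_def cone_angle_def)

lemma K_le_theta: "K \<le> \<theta>"
  using sin_x_le_x[of \<theta>] theta_range K by (simp add: theta_def)

lemma max_cone_angle_lt_pi3: "(real \<Delta> - 1 + \<epsilon>) * \<theta> < pi / 3"
proof -
  have p: "0 < real \<Delta> - 1 + \<epsilon>" using Delta eps by simp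
  hence "(real \<Delta> - 1 + \<epsilon>) * \<theta> < (real \<Delta> - 1 + \<epsilon>) * (pi / (3 * (real \<Delta> - 1 + \<epsilon>)))"
    using theta_range by (intro mult_strict_left_mono) auto
  also have "\<dots> = pi / 3" using p by (simp add: field_simps)
  finally show ?thesis .
qed

lemma theta_lt_pi3: "\<theta> < pi / 3"
proof -
  have "1 * \<theta> \<le> (real \<Delta> - 1 + \<epsilon>) * \<theta>" using Delta eps theta_range by (intro mult_right_mono) auto
  thus ?thesis using max_cone_angle_lt_pi3 by simp
qed

lemma Delta_theta_lt_pi2: "real \<Delta> * \<theta> < pi / 2"
proof -
  have "real \<Delta> \<le> 3 / 2 * (real \<Delta> - 1 + \<epsilon>)" using Delta eps by simp
  hence "real \<Delta> * \<theta> \<le> 3 / 2 * ((real \<Delta> - 1 + \<epsilon>) * \<theta>)"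
    using theta_range mult_right_mono[of _ _ \<theta>] by fastforce
  thus ?thesis using max_cone_angle_lt_pi3 by linarith
qed

lemma cone_angle_nonneg: "d \<le> \<Delta> \<Longrightarrow> 0 \<le> cone_angle d"
  unfolding cone_angle_def using eps theta_range by auto

lemma cone_angle_le_Delta_theta: "d \<le> \<Delta> \<Longrightarrow> cone_angle d \<le> real \<Delta> * \<theta>"
  unfolding cone_angle_def using theta_range eps mult_right_mono[of _ _ \<theta>]
  by (smt (verit) mult_left_le of_nat_le_iff)

lemma cone_angle_le_pi: assumes "d \<le> \<Delta>" shows "cone_angle d \<le> pi"
  using cone_angle_le_Delta_theta[OF assms] Delta_theta_lt_pi2 pi_gt_zero by linarith

lemma cos_half_cone_angle_nonneg: "d \<le> \<Delta> \<Longrightarrow> 0 \<le> cos (cone_angle d / 2)"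
  using cone_angle_nonneg cone_angle_le_Delta_theta Delta_theta_lt_pi2 by (intro cos_ge_zero) fastforce+

lemma cone_angle_le_max: assumes "d \<le> \<Delta> - 1" shows "cone_angle d \<le> (real \<Delta> - 1 + \<epsilon>) * \<theta>"
proof -
  have "real d + (real \<Delta> - real d) * \<epsilon> = real \<Delta> * \<epsilon> + real d * (1 - \<epsilon>)"
    by (simp add: algebra_simps)
  also have "\<dots> \<le> real \<Delta> * \<epsilon> + (real \<Delta> - 1) * (1 - \<epsilon>)"
    using assms Delta eps by (intro add_left_mono mult_right_mono) auto
  also have "\<dots> = real \<Delta> - 1 + \<epsilon>" by (simp add: algebra_simps)
  finally show ?thesis unfolding cone_angle_def using theta_range by (intro mult_right_mono) auto
qed

lemma cone_angle_lt_pi3: "d \<le> \<Delta> - 1 \<Longrightarrow> cone_angle d < pi / 3"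
  using cone_angle_le_max max_cone_angle_lt_pi3 by fastforce

lemma one_plus_K_power_le_3: "(1 + K) ^ (\<Delta> - 1) \<le> 3"
proof -
  have "(1 + K) ^ (\<Delta> - 1) \<le> exp K ^ (\<Delta> - 1)"
    using K by (intro power_mono exp_ge_add_one_self) auto
  also have "\<dots> = exp (real (\<Delta> - 1) * K)" by (simp add: exp_of_nat_mult)
  also have "\<dots> \<le> exp (21 / 20)"
  proof -
    have "real (\<Delta> - 1) * K \<le> (real \<Delta> - 1 + \<epsilon>) * \<theta>"
      using K_le_theta Delta eps K by (intro mult_mono) auto
    thus ?thesis using max_cone_angle_lt_pi3 pi_approx(2) by simp
  qed
  also have "\<dots> = exp 1 * exp (1 / 20)" by (simp flip: exp_add)
  also have "\<dots> \<le> (272 / 100) * (1 + 1 / 20 + (1 / 20)\<^sup>2)"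
    using e_less_272 exp_bound[of "1 / 20"] by (intro mult_mono) auto
  also have "\<dots> \<le> 3" by (simp add: power2_eq_square)
  finally show ?thesis .
qed

lemma denom_top_eq: "denom (\<Delta> - 1) = cos (cone_angle (\<Delta> - 1) / 2) * (real k - 1) - \<epsilon> * (1 + K) ^ (\<Delta> - 1)"
  using Delta by (simp add: denom_def of_nat_diff)

lemma denom_top_pos: "0 < denom (\<Delta> - 1)"
proof -
  have "cone_angle (\<Delta> - 1) / 2 \<le> pi / 6" using cone_angle_le_max[of "\<Delta> - 1"] max_cone_angle_lt_pi3 by simp
  hence "cos (pi / 6) \<le> cos (cone_angle (\<Delta> - 1) / 2)"
    using cone_angle_nonneg[of "\<Delta> - 1"] by (intro cos_monotone_0_pi_le) auto
  moreover have "17 / 10 \<le> sqrt 3" by (rule real_le_rsqrt) (simp add: power2_eq_square)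
  ultimately have "17 / 20 \<le> cos (cone_angle (\<Delta> - 1) / 2)" by (simp add: cos_30)
  hence ck: "17 / 20 * real \<Delta> \<le> cos (cone_angle (\<Delta> - 1) / 2) * (real k - 1)"
    using k_gt Delta by (intro mult_mono) auto
  have eX: "\<epsilon> * (1 + K) ^ (\<Delta> - 1) \<le> (1 + K) ^ (\<Delta> - 1)"
    using eps K by (simp add: mult_left_le_one_le)
  show ?thesis
  proof (cases "\<Delta> = 3")
    case True
    \<comment> \<open>here the crude bound one_plus_K_power_le_3 is too weak\<close>
    have "2 * \<theta> \<le> (real \<Delta> - 1 + \<epsilon>) * \<theta>" using True eps theta_range by simp
    hence "2 * \<theta> < pi / 3" using max_cone_angle_lt_pi3 by linarith
    hence "K < 5236 / 10000" using K_le_theta pi_approx(2) by simp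
    hence "(1 + K) ^ 2 \<le> (1 + 5236 / 10000) ^ 2" using K by (intro power_mono) auto
    thus ?thesis using ck eX True unfolding denom_top_eq by (simp add: power2_eq_square)
  next
    case False
    hence "4 \<le> real \<Delta>" using Delta by simp
    thus ?thesis using ck eX one_plus_K_power_le_3 unfolding denom_top_eq by simp
  qed
qed

lemma one_minus_inverse_le_fbound:
  assumes "0 \<le> K" shows "1 - 1 / (1 + K) ^ d \<le> fbound d K p"
proof -
  define X where "X = (1 + K) ^ d"
  have X: "1 \<le> X" using assms by (simp add: X_def one_le_power)
  have "(1 - 1 / X)\<^sup>2 = 1 + 1 / X\<^sup>2 - 2 / X"
    using X by (simp add: power2_eq_square field_simps)
  also have "\<dots> \<le> 1 + 1 / X\<^sup>2 - 2 * cos p / X"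
    using X by (simp add: divide_right_mono)
  finally have "1 - 1 / X \<le> sqrt (1 + 1 / X\<^sup>2 - 2 * cos p / X)"
    using X by (simp add: real_le_rsqrt)
  moreover have "(1 + K) ^ (2 * d) = X\<^sup>2" by (simp add: X_def power_mult power2_eq_square power_mult_distrib mult.commute)
  ultimately show ?thesis unfolding fbound_def X_def by simp
qed

lemma denom_top_large: "(1 + \<epsilon>) * (real \<Delta> - 1) \<le> denom (\<Delta> - 1)"
proof -
  define X where "X = (1 + K) ^ (\<Delta> - 1)"
  define f where "f = fbound (\<Delta> - 1) K (cone_angle (\<Delta> - 1))"
  have c2: "f \<noteq> 0" "(1 + \<epsilon>) * X / denom (\<Delta> - 1) \<le> K / f"
    using cond2_denom[of "\<Delta> - 1"] by (simp_all add: f_def X_def)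
  have X1: "1 \<le> X" using K by (simp add: X_def one_le_power)
  have f1: "1 - 1 / X \<le> f" unfolding f_def X_def by (rule one_minus_inverse_le_fbound) (use K in simp)
  hence "0 < f" using c2(1) X1 by (smt (verit) divide_le_eq_1)
  hence "(1 + \<epsilon>) * X * f \<le> K * denom (\<Delta> - 1)"
    using c2(2) denom_top_pos by (simp add: divide_simps mult.commute)
  moreover have "(1 + \<epsilon>) * (X - 1) \<le> (1 + \<epsilon>) * X * f"
    using f1 X1 eps by (simp add: divide_simps mult.commute mult.assoc)
  moreover have "(real \<Delta> - 1) * K \<le> X - 1"
    using Bernoulli_inequality[of K "\<Delta> - 1"] K Delta by (simp add: X_def of_nat_diff)
  ultimately have "(1 + \<epsilon>) * ((real \<Delta> - 1) * K) \<le> K * denom (\<Delta> - 1)"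
    using eps by (smt (verit, best) mult_left_mono)
  hence "((1 + \<epsilon>) * (real \<Delta> - 1)) * K \<le> denom (\<Delta> - 1) * K" by (simp add: algebra_simps)
  thus ?thesis using K by simp
qed

lemma denom_pos: assumes "d \<le> \<Delta>" shows "0 < denom d"
proof (cases "d = \<Delta>")
  case True
  have "0 < cos (cone_angle \<Delta> / 2)"
    using cone_angle_nonneg[of \<Delta>] cone_angle_le_Delta_theta[of \<Delta>] Delta_theta_lt_pi2
    by (intro cos_gt_zero_pi) auto
  thus ?thesis using True k_gt by (simp add: denom_def)
next
  case False
  define n where "n = \<Delta> - 1"
  have d: "d \<le> n" "real n = real \<Delta> - 1" using assms False Delta by (auto simp: n_def)
  have "cos (cone_angle n / 2) \<le> cos (cone_angle d / 2)"
  proof -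
    have "cone_angle d \<le> cone_angle n"
      unfolding cone_angle_def using d eps theta_range mult_nonneg_nonneg[of "real n - real d" "1 - \<epsilon>"]
      by (intro mult_right_mono) (auto simp: algebra_simps)
    thus ?thesis using cone_angle_nonneg[of d] cone_angle_le_pi[of n] d
      by (intro cos_monotone_0_pi_le) (auto simp: n_def)
  qed
  \<comment> \<open>compare with d = n = \<Delta> - 1, using the explicit lower bound on denom n\<close>
  hence "(1 + \<epsilon>) * real n + \<epsilon> * (1 + K) ^ n - (real \<Delta> - real d - 1)
      - \<epsilon> * (real \<Delta> - real d) * (1 + K) ^ d \<le> denom d"
    using denom_top_large denom_top_eq d k_gt cos_le_one[of "cone_angle d / 2"]
      mult_right_mono[of "cos (cone_angle n / 2)" "cos (cone_angle d / 2)" "real k - 1"]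
      mult_right_mono[of "cos (cone_angle d / 2)" 1 "real \<Delta> - real d - 1"]
    unfolding denom_def n_def by (auto simp: algebra_simps)
  moreover have "real (n + 1 - d) * (1 + K) ^ d < real d + real n + (1 + K) ^ n"
    using scaled_power_lt[of "1 + K" n d] K one_plus_K_power_le_3 d Delta by (simp add: n_def)
  hence "0 < \<epsilon> * (real d + real n + (1 + K) ^ n - real (n + 1 - d) * (1 + K) ^ d)"
    using eps by simp
  moreover have "\<epsilon> * real d \<le> real d" using eps by (simp add: mult_left_le_one_le)
  ultimately show ?thesis using d by (simp add: algebra_simps of_nat_diff)
qed

section \<open>Estimates at a single vertex\<close>

definition admissible :: "complex \<Rightarrow> bool" where
  "admissible z \<longleftrightarrow> cmod z \<le> \<epsilon> \<or> (\<bar>Arg z\<bar> \<le> \<epsilon> * \<theta> \<and> \<epsilon> < cmod z \<and> cmod z \<le> 1)"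

text \<open>The colours that are good or neutral for a vertex whose fixed neighbours are recorded by Q.\<close>

definition nonbad :: "(nat \<times> complex) multiset \<Rightarrow> nat set" where
  "nonbad Q = {l \<in> {1..k}. \<forall>q\<in>#Q. fst q = l \<longrightarrow> \<epsilon> < cmod (snd q)}"

text \<open>The shape of the family Y l = Z(G - u | all neighbours of u see colour l) that the
  induction guarantees.\<close>

definition balanced :: "nat \<Rightarrow> (nat \<Rightarrow> complex) \<Rightarrow> (nat \<Rightarrow> real) \<Rightarrow> bool" where
  "balanced d Y \<psi> \<longleftrightarrow> (\<forall>l\<in>{1..k}. Y l \<noteq> 0 \<and> Y l = rcis (cmod (Y l)) (\<psi> l)) \<and>
      (\<forall>l\<in>{1..k}. \<forall>l'\<in>{1..k}. \<bar>\<psi> l - \<psi> l'\<bar> \<le> real d * \<theta> \<and> cmod (Y l) \<le> (1 + K) ^ d * cmod (Y l'))"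

lemma admissible_norm_le_one: "admissible z \<Longrightarrow> cmod z \<le> 1"
  using eps by (auto simp: admissible_def)

lemma admissible_norm_diff_one: assumes "admissible z" shows "cmod (z - 1) \<le> 1 + \<epsilon>"
proof (cases "cmod z \<le> \<epsilon>")
  case True
  thus ?thesis using norm_triangle_ineq4[of z 1] by simp
next
  case False
  hence z: "\<bar>Arg z\<bar> \<le> \<epsilon> * \<theta>" "cmod z \<le> 1" using assms by (auto simp: admissible_def)
  have "\<epsilon> * \<theta> \<le> \<theta>" using eps theta_range by (simp add: mult_left_le_one_le)
  hence "cmod (rcis (cmod z) (Arg z) - rcis 1 0) \<le> 1"
    using z theta_lt_pi3 by (intro cmod_rcis_diff_le_if_angle_le_pi3) auto
  thus ?thesis using eps by (simp add: rcis_cmod_Arg)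
qed

lemma colour_prod_norm_le_one:
  assumes "\<forall>q\<in>#Q. admissible (snd q)" shows "cmod (colour_prod Q l) \<le> 1"
proof -
  have "\<forall>q\<in>#Q. cmod (snd q) \<le> 1" using assms admissible_norm_le_one by blast
  thus ?thesis unfolding colour_prod_eq_prod_mset_filter by (intro norm_prod_mset_le_one) auto
qed

lemma colour_prod_norm_le_eps:
  assumes "\<forall>q\<in>#Q. admissible (snd q)" "q0 \<in># Q" "fst q0 = l" "cmod (snd q0) \<le> \<epsilon>"
  shows "cmod (colour_prod Q l) \<le> \<epsilon>"
proof -
  have "cmod (prod_mset (image_mset snd (filter_mset (\<lambda>q. fst q = l) Q))) \<le> cmod (snd q0)"
    using assms(1-3) admissible_norm_le_one by (intro norm_prod_mset_le_member) force+
  thus ?thesis using assms(4) unfolding colour_prod_eq_prod_mset_filter by linarith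
qed

lemma colour_prod_polar:
  assumes "\<forall>q\<in>#Q. admissible (snd q)" "\<forall>q\<in>#Q. fst q = l \<longrightarrow> \<epsilon> < cmod (snd q)"
  obtains t where "colour_prod Q l = rcis (cmod (colour_prod Q l)) t"
    "\<bar>t\<bar> \<le> real (colour_count Q l) * (\<epsilon> * \<theta>)" "colour_prod Q l \<noteq> 0"
proof -
  have "z \<noteq> 0 \<and> \<bar>Arg z\<bar> \<le> \<epsilon> * \<theta>" if "z \<in># image_mset snd (filter_mset (\<lambda>q. fst q = l) Q)" for z
  proof -
    from that obtain q where "q \<in># Q" "fst q = l" "z = snd q" by (auto simp: image_iff)
    thus ?thesis using assms eps by (force simp: admissible_def)
  qed
  hence "\<forall>z\<in>#image_mset snd (filter_mset (\<lambda>q. fst q = l) Q). z \<noteq> 0 \<and> \<bar>Arg z\<bar> \<le> \<epsilon> * \<theta>" by blast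
  from prod_mset_polar[OF this] show thesis
    unfolding colour_prod_eq_prod_mset_filter[symmetric] size_image_mset colour_count_def[symmetric]
    using that by blast
qed

lemma balanced_min:
  assumes "balanced d Y \<psi>"
  defines "\<mu> \<equiv> Min (cmod ` Y ` {1..k})"
  shows "0 < \<mu>" "\<And>l. l \<in> {1..k} \<Longrightarrow> \<mu> \<le> cmod (Y l)"
    "\<And>l. l \<in> {1..k} \<Longrightarrow> cmod (Y l) \<le> (1 + K) ^ d * \<mu>"
proof -
  have "\<mu> \<in> cmod ` Y ` {1..k}" unfolding \<mu>_def using k_gt by (intro Min_in) auto
  then obtain l0 where l0: "l0 \<in> {1..k}" "\<mu> = cmod (Y l0)" by auto
  show "0 < \<mu>" using assms(1) l0 by (auto simp: balanced_def)
  show "\<mu> \<le> cmod (Y l)" if "l \<in> {1..k}" for l unfolding \<mu>_def using that by (intro Min_le) auto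
  show "cmod (Y l) \<le> (1 + K) ^ d * \<mu>" if "l \<in> {1..k}" for l
    using assms(1) l0 that by (auto simp: balanced_def)
qed

text \<open>For colours that are not bad, the terms colour_prod Q l * Y l all lie in one sector of
  opening cone_angle d: the fixed neighbours of colour l rotate Y l by at most colour_count Q l
  times \<epsilon> \<theta>, and two distinct colours share the at most \<Delta> - d fixed neighbours.\<close>

lemma nonbad_terms_polar:
  assumes Y: "balanced d Y \<psi>" and Qa: "\<forall>q\<in>#Q. admissible (snd q)" and dQ: "d + size Q \<le> \<Delta>"
  obtains \<alpha> where
    "\<And>l. l \<in> nonbad Q \<Longrightarrow> colour_prod Q l * Y l = rcis (cmod (colour_prod Q l * Y l)) (\<alpha> l)
                              \<and> colour_prod Q l * Y l \<noteq> 0"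
    "\<And>l l'. l \<in> nonbad Q \<Longrightarrow> l' \<in> nonbad Q \<Longrightarrow> \<bar>\<alpha> l - \<alpha> l'\<bar> \<le> cone_angle d"
proof -
  have "\<forall>l\<in>nonbad Q. \<exists>t. colour_prod Q l = rcis (cmod (colour_prod Q l)) t \<and>
      \<bar>t\<bar> \<le> real (colour_count Q l) * (\<epsilon> * \<theta>) \<and> colour_prod Q l \<noteq> 0"
  proof
    fix l assume "l \<in> nonbad Q"
    hence "\<forall>q\<in>#Q. fst q = l \<longrightarrow> \<epsilon> < cmod (snd q)" by (simp add: nonbad_def)
    from colour_prod_polar[OF Qa this] show "\<exists>t. colour_prod Q l = rcis (cmod (colour_prod Q l)) t \<and>
      \<bar>t\<bar> \<le> real (colour_count Q l) * (\<epsilon> * \<theta>) \<and> colour_prod Q l \<noteq> 0" by blast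
  qed
  then obtain \<tau> where \<tau>: "\<And>l. l \<in> nonbad Q \<Longrightarrow> colour_prod Q l = rcis (cmod (colour_prod Q l)) (\<tau> l) \<and>
      \<bar>\<tau> l\<bar> \<le> real (colour_count Q l) * (\<epsilon> * \<theta>) \<and> colour_prod Q l \<noteq> 0"
    by metis
  have Yl: "l \<in> nonbad Q \<Longrightarrow> Y l \<noteq> 0 \<and> Y l = rcis (cmod (Y l)) (\<psi> l)" for l
    using Y by (auto simp: balanced_def nonbad_def)
  show thesis
  proof (rule that[of "\<lambda>l. \<tau> l + \<psi> l"])
    show "colour_prod Q l * Y l = rcis (cmod (colour_prod Q l * Y l)) (\<tau> l + \<psi> l) \<and> colour_prod Q l * Y l \<noteq> 0"
      if "l \<in> nonbad Q" for l
      using \<tau>[OF that] Yl[OF that] by (metis norm_mult rcis_mult mult_eq_0_iff)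
    show "\<bar>(\<tau> l + \<psi> l) - (\<tau> l' + \<psi> l')\<bar> \<le> cone_angle d" if l: "l \<in> nonbad Q" "l' \<in> nonbad Q" for l l'
    proof (cases "l = l'")
      case True thus ?thesis using cone_angle_nonneg dQ by simp
    next
      case False
      have "\<bar>(\<tau> l + \<psi> l) - (\<tau> l' + \<psi> l')\<bar> \<le> \<bar>\<tau> l\<bar> + \<bar>\<tau> l'\<bar> + \<bar>\<psi> l - \<psi> l'\<bar>"
        by simp
      also have "\<dots> \<le> (real (colour_count Q l) + real (colour_count Q l')) * (\<epsilon> * \<theta>) + real d * \<theta>"
      proof -
        have "\<bar>\<psi> l - \<psi> l'\<bar> \<le> real d * \<theta>" using Y l by (auto simp: balanced_def nonbad_def)
        thus ?thesis using \<tau>[OF l(1)] \<tau>[OF l(2)] by (simp add: algebra_simps)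
      qed
      also have "\<dots> \<le> (real \<Delta> - real d) * (\<epsilon> * \<theta>) + real d * \<theta>"
        using colour_count_add_le[OF False, of Q] dQ eps theta_range
        by (intro add_right_mono mult_right_mono) auto
      also have "\<dots> = cone_angle d" by (simp add: cone_angle_def algebra_simps)
      finally show ?thesis .
    qed
  qed
qed

lemma nonbad_sum_lower_bound:
  assumes Y: "balanced d Y \<psi>" and Qa: "\<forall>q\<in>#Q. admissible (snd q)" and dQ: "d + size Q \<le> \<Delta>"
  shows "cos (cone_angle d / 2) * ((real k - (real \<Delta> - real d)) * Min (cmod ` Y ` {1..k}))
           \<le> cmod (\<Sum>l\<in>nonbad Q. colour_prod Q l * Y l)"
proof -
  define \<mu> where "\<mu> = Min (cmod ` Y ` {1..k})"
  define g where "g l = colour_prod Q l * Y l" for l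
  define Good where "Good = {l\<in>{1..k}. \<forall>q\<in>#Q. fst q \<noteq> l}"
  obtain \<alpha> where \<alpha>: "\<And>l. l \<in> nonbad Q \<Longrightarrow> g l = rcis (cmod (g l)) (\<alpha> l)"
    and \<alpha>_close: "\<And>l l'. l \<in> nonbad Q \<Longrightarrow> l' \<in> nonbad Q \<Longrightarrow> \<bar>\<alpha> l - \<alpha> l'\<bar> \<le> cone_angle d"
    using nonbad_terms_polar[OF Y Qa dQ] unfolding g_def by metis
  have dle: "d \<le> \<Delta>" using dQ by simp
  have "(real k - (real \<Delta> - real d)) * \<mu> \<le> real (card Good) * \<mu>"
  proof -
    have "card ({1..k} - Good) \<le> size Q"
      by (rule card_le_size_if_subset_fst) (force simp: Good_def)
    moreover have "card ({1..k} - Good) = k - card Good"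
      by (subst card_Diff_subset) (auto simp: Good_def)
    ultimately show ?thesis using dQ balanced_min(1)[OF Y] by (intro mult_right_mono) (auto simp: \<mu>_def)
  qed
  also have "\<dots> \<le> (\<Sum>l\<in>Good. cmod (g l))"
    using sum_mono[of Good "\<lambda>_. \<mu>" "\<lambda>l. cmod (g l)"] balanced_min(2)[OF Y] colour_prod_absent
    by (auto simp: Good_def g_def norm_mult \<mu>_def)
  also have "\<dots> \<le> (\<Sum>l\<in>nonbad Q. cmod (g l))"
    by (rule sum_mono2) (auto simp: Good_def nonbad_def)
  finally have "cos (cone_angle d / 2) * ((real k - (real \<Delta> - real d)) * \<mu>)
      \<le> cos (cone_angle d / 2) * (\<Sum>l\<in>nonbad Q. cmod (g l))"
    using cos_half_cone_angle_nonneg[OF dle] by (rule mult_left_mono)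
  also have "\<dots> \<le> cmod (\<Sum>l\<in>nonbad Q. rcis (cmod (g l)) (\<alpha> l))"
    using \<alpha>_close cone_angle_le_pi[OF dle]
    by (intro cos_half_mul_sum_le_cmod_sum_rcis) (auto simp: nonbad_def)
  also have "\<dots> = cmod (\<Sum>l\<in>nonbad Q. g l)" using \<alpha> by (metis (no_types, lifting) sum.cong)
  finally show ?thesis by (simp add: \<mu>_def g_def)
qed

lemma bad_sum_upper_bound:
  assumes Y: "balanced d Y \<psi>" and Qa: "\<forall>q\<in>#Q. admissible (snd q)" and dQ: "d + size Q \<le> \<Delta>"
  shows "(\<Sum>l\<in>{1..k} - nonbad Q. cmod (colour_prod Q l * Y l))
           \<le> (real \<Delta> - real d) * (\<epsilon> * ((1 + K) ^ d * Min (cmod ` Y ` {1..k})))"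
proof -
  define R where "R = (1 + K) ^ d * Min (cmod ` Y ` {1..k})"
  have "cmod (colour_prod Q l * Y l) \<le> \<epsilon> * R" if l: "l \<in> {1..k} - nonbad Q" for l
  proof -
    have "\<exists>q\<in>#Q. fst q = l \<and> cmod (snd q) \<le> \<epsilon>" using l by (auto simp: nonbad_def not_less)
    then obtain q where "q \<in># Q" "fst q = l" "cmod (snd q) \<le> \<epsilon>" by blast
    hence "cmod (colour_prod Q l) \<le> \<epsilon>" by (intro colour_prod_norm_le_eps[OF Qa])
    thus ?thesis using balanced_min(3)[OF Y] l eps unfolding R_def norm_mult by (intro mult_mono) auto
  qed
  hence "(\<Sum>l\<in>{1..k} - nonbad Q. cmod (colour_prod Q l * Y l)) \<le> real (card ({1..k} - nonbad Q)) * (\<epsilon> * R)"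
    using sum_bounded_above[of "{1..k} - nonbad Q" "\<lambda>l. cmod (colour_prod Q l * Y l)" "\<epsilon> * R"] by simp
  also have "\<dots> \<le> (real \<Delta> - real d) * (\<epsilon> * R)"
  proof -
    have "card ({1..k} - nonbad Q) \<le> size Q"
      by (rule card_le_size_if_subset_fst) (force simp: nonbad_def not_less)
    thus ?thesis using dQ eps balanced_min(1)[OF Y] K by (intro mult_right_mono) (auto simp: R_def)
  qed
  finally show ?thesis by (simp add: R_def)
qed

lemma sum_lower_bound:
  assumes Y: "balanced d Y \<psi>" and Qa: "\<forall>q\<in>#Q. admissible (snd q)" and dQ: "d + size Q \<le> \<Delta>"
  shows "Min (cmod ` Y ` {1..k}) * denom d \<le> cmod (\<Sum>l\<in>{1..k}. colour_prod Q l * Y l)"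
proof -
  define g where "g l = colour_prod Q l * Y l" for l
  have "(\<Sum>l\<in>{1..k}. g l) = (\<Sum>l\<in>nonbad Q. g l) + (\<Sum>l\<in>{1..k} - nonbad Q. g l)"
    using sum.subset_diff[of "nonbad Q" "{1..k}" g]
    by (metis (no_types, lifting) add.commute finite_atLeastAtMost mem_Collect_eq nonbad_def subsetI)
  hence "cmod (\<Sum>l\<in>nonbad Q. g l) - (\<Sum>l\<in>{1..k} - nonbad Q. cmod (g l)) \<le> cmod (\<Sum>l\<in>{1..k}. g l)"
    using norm_triangle_ineq4[of "\<Sum>l\<in>{1..k}. g l" "\<Sum>l\<in>{1..k} - nonbad Q. g l"]
      norm_sum[of g "{1..k} - nonbad Q"] by simp
  thus ?thesis
    using nonbad_sum_lower_bound[OF Y Qa dQ] bad_sum_upper_bound[OF Y Qa dQ]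
    unfolding g_def denom_def by (simp add: algebra_simps)
qed

lemma term_diff_bound:
  assumes Y: "balanced d Y \<psi>" and Qa: "\<forall>q\<in>#Q. admissible (snd q)"
    and dQ: "d + size Q \<le> \<Delta>" "d \<le> \<Delta> - 1" and ab: "a \<in> {1..k}" "b \<in> {1..k}"
  shows "cmod (colour_prod Q a * Y a - colour_prod Q b * Y b)
           \<le> (1 + \<epsilon>) * ((1 + K) ^ d * Min (cmod ` Y ` {1..k}))"
proof -
  define R where "R = (1 + K) ^ d * Min (cmod ` Y ` {1..k})"
  define g where "g l = colour_prod Q l * Y l" for l
  have "0 < R" using balanced_min(1)[OF Y] K by (simp add: R_def)
  have g_le: "cmod (g l) \<le> R" if "l \<in> {1..k}" for l
    using colour_prod_norm_le_one[OF Qa, of l] balanced_min(3)[OF Y that] unfolding g_def R_def norm_mult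
    by (metis mult_left_le_one_le norm_ge_zero order_trans)
  show ?thesis
  proof (cases "a \<in> nonbad Q \<and> b \<in> nonbad Q")
    case True
    obtain \<alpha> where "\<And>l. l \<in> nonbad Q \<Longrightarrow> g l = rcis (cmod (g l)) (\<alpha> l)"
      and "\<And>l l'. l \<in> nonbad Q \<Longrightarrow> l' \<in> nonbad Q \<Longrightarrow> \<bar>\<alpha> l - \<alpha> l'\<bar> \<le> cone_angle d"
      using nonbad_terms_polar[OF Y Qa dQ(1)] unfolding g_def by metis
    hence "cmod (rcis (cmod (g a)) (\<alpha> a) - rcis (cmod (g b)) (\<alpha> b)) \<le> R"
      using True g_le ab cone_angle_lt_pi3[OF dQ(2)]
      by (intro cmod_rcis_diff_le_if_angle_le_pi3) fastforce+
    thus ?thesis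
      using \<open>\<And>l. l \<in> nonbad Q \<Longrightarrow> g l = _\<close> True \<open>0 < R\<close> eps
      by (simp add: g_def R_def) (smt (verit) mult_le_cancel_right1)
  next
    case False
    then obtain l l' where ll: "{l, l'} = {a, b}" "l \<notin> nonbad Q" by auto
    hence "\<exists>q\<in>#Q. fst q = l \<and> cmod (snd q) \<le> \<epsilon>" using ab by (auto simp: nonbad_def not_less)
    hence "cmod (g l) \<le> \<epsilon> * R"
      using colour_prod_norm_le_eps[OF Qa] balanced_min(3)[OF Y] ll ab eps unfolding g_def R_def norm_mult
      by (smt (verit, ccfv_SIG) doubleton_eq_iff mult_mono norm_ge_zero)
    moreover have "cmod (g l') \<le> R" using g_le ll ab by (auto simp: doubleton_eq_iff)
    moreover have "cmod (g a - g b) \<le> cmod (g l) + cmod (g l')"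
      using ll norm_triangle_ineq4[of "g a" "g b"] by (auto simp: doubleton_eq_iff)
    ultimately show ?thesis by (simp add: g_def R_def algebra_simps)
  qed
qed

lemma top_degree_diff_bound:
  assumes Y: "balanced d Y \<psi>" and d: "d \<le> \<Delta>" and ab: "a \<in> {1..k}" "b \<in> {1..k}"
  shows "cmod (Y a - Y b) \<le> fbound d K (cone_angle d) * ((1 + K) ^ d * Min (cmod ` Y ` {1..k}))"
proof -
  define r0 where "r0 = 1 / (1 + K) ^ d"
  have r0: "0 < r0" "r0 \<le> 1" using K by (auto simp: r0_def one_le_power)
  have "fbound d K (cone_angle d) =
      max (2 * sin (cone_angle d / 2)) (sqrt (1 + r0\<^sup>2 - 2 * r0 * cos (cone_angle d)))"
    by (simp add: fbound_def r0_def power_mult power_divide mult.commute)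
  moreover have "r0 * cmod (Y l') \<le> cmod (Y l)" if "l \<in> {1..k}" "l' \<in> {1..k}" for l l'
    using Y that K by (auto simp: balanced_def r0_def divide_simps mult.commute)
  moreover have "\<bar>\<psi> a - \<psi> b\<bar> \<le> cone_angle d"
  proof -
    have "\<bar>\<psi> a - \<psi> b\<bar> \<le> real d * \<theta>" using Y ab by (auto simp: balanced_def)
    also have "\<dots> \<le> cone_angle d" using d eps theta_range by (simp add: cone_angle_def mult_right_mono)
    finally show ?thesis .
  qed
  ultimately show ?thesis
    using cmod_rcis_diff_le_chord_bound_sym[OF r0, of "cmod (Y a)" "cmod (Y b)"
        "(1 + K) ^ d * Min (cmod ` Y ` {1..k})" "\<psi> a" "\<psi> b" "cone_angle d"]
      Y ab balanced_min(3)[OF Y] cone_angle_le_pi[OF d]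
    by (simp add: balanced_def mult.commute)
qed

text \<open>This is where the two hypotheses on K enter: the left side is the change of the partition
  function when one pendant at the vertex is recoloured (see recolour_stable_step), the right side
  is K times the lower bound of sum_lower_bound.\<close>

lemma recolour_diff_bound:
  assumes Y: "balanced d Y \<psi>" and Qa: "\<forall>q\<in>#Q. admissible (snd q)"
    and dQ: "d + size Q + 1 \<le> \<Delta>" and ab: "a \<in> {1..k}" "b \<in> {1..k}" and x: "admissible x"
  shows "cmod ((x - 1) * (colour_prod Q a * Y a - colour_prod Q b * Y b))
           \<le> K * (Min (cmod ` Y ` {1..k}) * denom d)"
proof -
  define \<mu> where "\<mu> = Min (cmod ` Y ` {1..k})"
  have "0 < \<mu>" using balanced_min(1)[OF Y] by (simp add: \<mu>_def)
  have x1: "cmod (x - 1) \<le> 1 + \<epsilon>" by (rule admissible_norm_diff_one[OF x])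
  have dle: "d \<le> \<Delta>" "d \<le> \<Delta> - 1" using dQ by auto
  show ?thesis
  proof (cases "d + 2 \<le> \<Delta>")
    case True
    have "cmod ((x - 1) * (colour_prod Q a * Y a - colour_prod Q b * Y b))
        \<le> (1 + \<epsilon>) * ((1 + \<epsilon>) * ((1 + K) ^ d * \<mu>))"
      unfolding norm_mult \<mu>_def using x1 term_diff_bound[OF Y Qa _ dle(2) ab] dQ eps
      by (intro mult_mono) auto
    also have "\<dots> = ((1 + \<epsilon>)\<^sup>2 * (1 + K) ^ d) * \<mu>" by (simp add: power2_eq_square algebra_simps)
    also have "\<dots> \<le> (K * denom d) * \<mu>"
      using cond1_denom[of d] True denom_pos[OF dle(1)] \<open>0 < \<mu>\<close>
      by (intro mult_right_mono) (auto simp: divide_le_eq)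
    finally show ?thesis by (simp add: \<mu>_def algebra_simps)
  next
    case False
    hence "size Q = 0" "d = \<Delta> - 1" using dQ by linarith+
    hence "Q = {#}" "d = \<Delta> - 1" by auto
    define f where "f = fbound d K (cone_angle d)"
    have "0 \<le> f" using sin_ge_zero[of "cone_angle d / 2"] cone_angle_nonneg[OF dle(1)] cone_angle_le_pi[OF dle(1)]
      by (simp add: f_def fbound_def le_max_iff_disj)
    hence "0 < f" using cond2_denom[of d] \<open>d = \<Delta> - 1\<close> by (simp add: f_def)
    have "cmod ((x - 1) * (colour_prod Q a * Y a - colour_prod Q b * Y b)) \<le> (1 + \<epsilon>) * (f * ((1 + K) ^ d * \<mu>))"
      unfolding norm_mult \<open>Q = {#}\<close> colour_prod_absent[of "{#}", simplified] \<mu>_def f_def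
      using x1 top_degree_diff_bound[OF Y dle(1) ab] eps by (intro mult_mono) auto
    also have "\<dots> = ((1 + \<epsilon>) * (1 + K) ^ d * f) * \<mu>" by (simp add: algebra_simps)
    also have "\<dots> \<le> (K * denom d) * \<mu>"
      using cond2_denom[of d] \<open>d = \<Delta> - 1\<close> denom_pos[OF dle(1)] \<open>0 < f\<close> \<open>0 < \<mu>\<close>
      by (intro mult_right_mono) (auto simp: f_def divide_simps)
    finally show ?thesis by (simp add: \<mu>_def algebra_simps)
  qed
qed

section \<open>The induction\<close>

text \<open>Pendants count towards the degree bound: each stands for an edge to a removed vertex.\<close>

definition admissible_instance :: "'a set \<Rightarrow> ('a \<Rightarrow> 'a \<Rightarrow> bool) \<Rightarrow> ('a set \<Rightarrow> complex)
    \<Rightarrow> ('a \<times> nat \<times> complex) multiset \<Rightarrow> bool" where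
  "admissible_instance V E w P \<longleftrightarrow> finite V \<and> (\<forall>x y. E x y \<longrightarrow> E y x) \<and> (\<forall>x. \<not> E x x) \<and>
     (\<forall>p\<in>#P. fst p \<in> V \<and> fst (snd p) \<in> {1..k} \<and> admissible (snd (snd p))) \<and>
     (\<forall>x\<in>V. \<forall>y\<in>V. E x y \<longrightarrow> admissible (w {x, y})) \<and>
     (\<forall>v\<in>V. card (nbrs V E v) + pendant_deg P v \<le> \<Delta>)"

definition Zpend :: "'a set \<Rightarrow> ('a \<Rightarrow> 'a \<Rightarrow> bool) \<Rightarrow> ('a set \<Rightarrow> complex)
    \<Rightarrow> ('a \<times> nat \<times> complex) multiset \<Rightarrow> complex" where
  "Zpend V E w P = Zpin V E w k P {} (\<lambda>_. 0)"

definition Zdel :: "'a set \<Rightarrow> ('a \<Rightarrow> 'a \<Rightarrow> bool) \<Rightarrow> ('a set \<Rightarrow> complex)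
    \<Rightarrow> ('a \<times> nat \<times> complex) multiset \<Rightarrow> 'a \<Rightarrow> nat \<Rightarrow> complex" where
  "Zdel V E w P u l =
     Zpend (V - {u}) E w (filter_mset (\<lambda>p. fst p \<noteq> u) P + pendants_around w u (\<lambda>_. l) (nbrs V E u))"

definition recolour_stable :: "'a set \<Rightarrow> ('a \<Rightarrow> 'a \<Rightarrow> bool) \<Rightarrow> ('a set \<Rightarrow> complex)
    \<Rightarrow> ('a \<times> nat \<times> complex) multiset \<Rightarrow> bool" where
  "recolour_stable V E w P \<longleftrightarrow> (\<forall>P0 v x a b. P = P0 + {#(v, b, x)#} \<and> a \<in> {1..k} \<longrightarrow>
      cmod (Zpend V E w (P0 + {#(v, a, x)#}) - Zpend V E w P) \<le> K * cmod (Zpend V E w P))"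

lemma Zpin_pin_vertex:
  assumes inst: "admissible_instance V E w P" and u: "u \<in> V" and l: "l \<in> {1..k}"
  shows "Zpin V E w k P {u} (\<lambda>_. l) = colour_prod (pendants_at P u) l * Zdel V E w P u l"
proof -
  have fin: "finite V" and sym: "\<forall>x y. E x y \<longrightarrow> E y x" and irr: "\<forall>x. \<not> E x x"
    and Pin: "\<forall>p\<in>#P. fst p \<in> V" using inst by (auto simp: admissible_instance_def)
  have "Zpin V E w k P {u} (\<lambda>_. l) = pendant_prod (filter_mset (\<lambda>p. fst p \<in> {u}) P) (\<lambda>_. l) *
      Zpin (V - {u}) E w k (filter_mset (\<lambda>p. fst p \<notin> {u}) P + pendants_from V E w {u} (\<lambda>_. l)) ({u} - {u}) (\<lambda>_. l)"
    by (rule Zpin_remove_independent) (use fin u sym irr l Pin in auto)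
  also have "Zpin (V - {u}) E w k (filter_mset (\<lambda>p. fst p \<notin> {u}) P + pendants_from V E w {u} (\<lambda>_. l)) ({u} - {u}) (\<lambda>_. l)
      = Zdel V E w P u l"
  proof -
    have "Zpin X E w k Y {} (\<lambda>_. l) = Zpin X E w k Y {} (\<lambda>_. 0)" for X Y by (rule Zpin_cong) simp
    thus ?thesis unfolding Zdel_def Zpend_def pendants_from_singleton[OF fin] by simp
  qed
  finally show ?thesis by (simp add: pendant_prod_pinned_at)
qed

lemma Zpend_expand:
  assumes inst: "admissible_instance V E w P" and u: "u \<in> V"
  shows "Zpend V E w P = (\<Sum>l\<in>{1..k}. colour_prod (pendants_at P u) l * Zdel V E w P u l)"
proof -
  have "finite V" using inst by (simp add: admissible_instance_def)
  have "Zpin V E w k P {u} ((\<lambda>_. 0)(u := l)) = Zpin V E w k P {u} (\<lambda>_. l)" for l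
    by (rule Zpin_cong) simp
  hence "Zpend V E w P = (\<Sum>l\<in>{1..k}. Zpin V E w k P {u} (\<lambda>_. l))"
    using Zpin_sum_colours[OF \<open>finite V\<close> u, of "{}" E w k P "\<lambda>_. 0"] by (simp add: Zpend_def)
  thus ?thesis by (simp add: Zpin_pin_vertex[OF inst u])
qed

lemma admissible_instance_remove:
  assumes inst: "admissible_instance V E w P" and u: "u \<in> V" and c: "\<forall>v. c v \<in> {1..k}"
  shows "admissible_instance (V - {u}) E w (filter_mset (\<lambda>p. fst p \<noteq> u) P + pendants_around w u c (nbrs V E u))"
proof -
  have fin: "finite V" and sym: "\<forall>x y. E x y \<longrightarrow> E y x" and irr: "\<forall>x. \<not> E x x"
    and wadm: "\<forall>x\<in>V. \<forall>y\<in>V. E x y \<longrightarrow> admissible (w {x, y})"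
    using inst by (auto simp: admissible_instance_def)
  have "finite (nbrs V E u)" using fin by (simp add: nbrs_def)
  hence "\<forall>p\<in>#pendants_around w u c (nbrs V E u). fst p \<in> V - {u} \<and> fst (snd p) \<in> {1..k} \<and> admissible (snd (snd p))"
    using c wadm u irr unfolding pendants_around_def nbrs_def by fastforce
  moreover have "\<forall>v\<in>V - {u}. card (nbrs (V - {u}) E v)
      + pendant_deg (filter_mset (\<lambda>p. fst p \<noteq> u) P + pendants_around w u c (nbrs V E u)) v \<le> \<Delta>"
    using inst degree_sum_remove_vertex[OF fin sym u] unfolding admissible_instance_def by simp
  ultimately show ?thesis using inst unfolding admissible_instance_def by auto
qed

text \<open>Passing from colour l' to colour l at u is done by recolouring the pendants left on the
  neighbours of u one at a time; by the induction hypothesis every step multiplies the partition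
  function by a number within distance K of 1, i.e. of modulus at most 1 + K and argument at most \<theta>.\<close>

lemma Zdel_ratio:
  assumes inst: "admissible_instance V E w P" and u: "u \<in> V" and l: "l \<in> {1..k}" "l' \<in> {1..k}"
    and IH: "\<And>P'. admissible_instance (V - {u}) E w P' \<Longrightarrow>
               Zpend (V - {u}) E w P' \<noteq> 0 \<and> recolour_stable (V - {u}) E w P'"
  obtains \<rho> \<sigma> where "Zdel V E w P u l = Zdel V E w P u l' * rcis \<rho> \<sigma>" "0 < \<rho>"
    "\<rho> \<le> (1 + K) ^ card (nbrs V E u)" "\<bar>\<sigma>\<bar> \<le> real (card (nbrs V E u)) * \<theta>"
proof -
  define N where "N = nbrs V E u"
  define col where "col S v = (if v \<in> S then l else l')" for S and v :: 'a
  define M where "M S = filter_mset (\<lambda>p. fst p \<noteq> u) P + pendants_around w u (col S) N" for S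
  define Z where "Z S = Zpend (V - {u}) E w (M S)" for S
  have fN: "finite N" using inst by (simp add: N_def nbrs_def admissible_instance_def)
  have IH': "Z S \<noteq> 0 \<and> recolour_stable (V - {u}) E w (M S)" for S
    unfolding Z_def M_def N_def using l by (intro IH admissible_instance_remove[OF inst u]) (auto simp: col_def)
  have "Z F \<noteq> 0 \<and> cmod (Z (insert a F) - Z F) \<le> K * cmod (Z F)" if "a \<in> N" "a \<notin> F" for a F
  proof -
    define X where "X = filter_mset (\<lambda>p. fst p \<noteq> u) P + pendants_around w u (col F) (N - {a})"
    have "pendants_around w u (col (insert a F)) (N - {a}) = pendants_around w u (col F) (N - {a})"
      by (rule pendants_around_cong) (auto simp: col_def)
    hence "M F = X + {#(a, l', w {u, a})#}" "M (insert a F) = X + {#(a, l, w {u, a})#}"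
      using pendants_around_remove[OF fN that(1), of w u] that(2) by (simp_all add: M_def X_def col_def)
    thus ?thesis using IH'[of F] l unfolding recolour_stable_def Z_def by simp
  qed
  then obtain \<rho> \<sigma> where "Z N = Z {} * rcis \<rho> \<sigma>" "0 < \<rho>" "\<rho> \<le> (1 + K) ^ card N"
    "\<bar>\<sigma>\<bar> \<le> real (card N) * \<theta>"
    using relative_error_chain[OF K fN, of Z] unfolding theta_def by blast
  moreover have "pendants_around w u (col N) N = pendants_around w u (\<lambda>_. l) N"
    by (rule pendants_around_cong) (simp add: col_def)
  hence "Z N = Zdel V E w P u l" unfolding Z_def M_def Zdel_def N_def by simp
  moreover have "col {} = (\<lambda>_. l')" by (simp add: col_def fun_eq_iff)
  hence "Z {} = Zdel V E w P u l'" unfolding Z_def M_def Zdel_def N_def by simp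
  ultimately show thesis using that unfolding N_def by metis
qed

lemma Zdel_balanced:
  assumes inst: "admissible_instance V E w P" and u: "u \<in> V"
    and IH: "\<And>P'. admissible_instance (V - {u}) E w P' \<Longrightarrow>
               Zpend (V - {u}) E w P' \<noteq> 0 \<and> recolour_stable (V - {u}) E w P'"
  obtains \<psi> where "balanced (card (nbrs V E u)) (Zdel V E w P u) \<psi>"
proof -
  define d where "d = card (nbrs V E u)"
  define Y where "Y = Zdel V E w P u"
  have nz: "\<forall>l\<in>{1..k}. Y l \<noteq> 0"
    using IH admissible_instance_remove[OF inst u] by (auto simp: Y_def Zdel_def)
  have ratio: "\<exists>\<rho> \<sigma>. Y l = Y l' * rcis \<rho> \<sigma> \<and> 0 < \<rho> \<and> \<rho> \<le> (1 + K) ^ d \<and> \<bar>\<sigma>\<bar> \<le> real d * \<theta>"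
    if "l \<in> {1..k}" "l' \<in> {1..k}" for l l'
    using Zdel_ratio[OF inst u that IH] unfolding Y_def d_def by blast
  have "d \<le> \<Delta>" using inst u unfolding admissible_instance_def d_def by fastforce
  hence "real d * \<theta> \<le> real \<Delta> * \<theta>" using theta_range by (intro mult_right_mono) auto
  hence "real d * \<theta> < pi / 2" using Delta_theta_lt_pi2 by linarith
  moreover have "1 \<in> {1..k}" using k_gt by simp
  ultimately obtain \<psi> where \<psi>: "\<And>l. l \<in> {1..k} \<Longrightarrow> Y l = rcis (cmod (Y l)) (\<psi> l)"
    "\<And>l l'. l \<in> {1..k} \<Longrightarrow> l' \<in> {1..k} \<Longrightarrow> \<bar>\<psi> l - \<psi> l'\<bar> \<le> real d * \<theta>"
    using common_phases[of 1 "{1..k}" Y "real d * \<theta>"] nz ratio by blast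
  have "cmod (Y l) \<le> (1 + K) ^ d * cmod (Y l')" if lk: "l \<in> {1..k}" "l' \<in> {1..k}" for l l'
  proof -
    obtain \<rho> \<sigma> where "Y l = Y l' * rcis \<rho> \<sigma>" "0 < \<rho>" "\<rho> \<le> (1 + K) ^ d" using ratio[OF lk] by blast
    thus ?thesis using mult_right_mono[of \<rho> "(1 + K) ^ d" "cmod (Y l')"] by (simp add: norm_mult mult.commute)
  qed
  hence "balanced d Y \<psi>" unfolding balanced_def using nz \<psi> by blast
  thus thesis using that by (simp add: Y_def d_def)
qed

lemma pendants_at_admissible:
  "admissible_instance V E w P \<Longrightarrow> \<forall>q\<in>#pendants_at P u. admissible (snd q)"
  by (auto simp: pendants_at_def admissible_instance_def)

lemma degree_budget:
  "admissible_instance V E w P \<Longrightarrow> u \<in> V \<Longrightarrow> card (nbrs V E u) + size (pendants_at P u) \<le> \<Delta>"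
  by (simp add: admissible_instance_def size_pendants_at)

lemma Zpend_lower_bound:
  assumes inst: "admissible_instance V E w P" and u: "u \<in> V"
    and Y: "balanced (card (nbrs V E u)) (Zdel V E w P u) \<psi>"
  shows "Min (cmod ` Zdel V E w P u ` {1..k}) * denom (card (nbrs V E u)) \<le> cmod (Zpend V E w P)"
  using sum_lower_bound[OF Y pendants_at_admissible[OF inst] degree_budget[OF inst u]]
  by (simp add: Zpend_expand[OF inst u])

lemma Zpend_nonzero_step:
  assumes inst: "admissible_instance V E w P" and u: "u \<in> V"
    and IH: "\<And>P'. admissible_instance (V - {u}) E w P' \<Longrightarrow>
               Zpend (V - {u}) E w P' \<noteq> 0 \<and> recolour_stable (V - {u}) E w P'"
  shows "Zpend V E w P \<noteq> 0"
proof -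
  obtain \<psi> where Y: "balanced (card (nbrs V E u)) (Zdel V E w P u) \<psi>"
    using Zdel_balanced[OF inst u IH] .
  have "0 < denom (card (nbrs V E u))" using degree_budget[OF inst u] by (intro denom_pos) simp
  hence "0 < Min (cmod ` Zdel V E w P u ` {1..k}) * denom (card (nbrs V E u))"
    using balanced_min(1)[OF Y] by simp
  thus ?thesis using Zpend_lower_bound[OF inst u Y] by auto
qed

lemma recolour_stable_step:
  assumes inst: "admissible_instance V E w P"
    and IH: "\<And>u P'. u \<in> V \<Longrightarrow> admissible_instance (V - {u}) E w P' \<Longrightarrow>
               Zpend (V - {u}) E w P' \<noteq> 0 \<and> recolour_stable (V - {u}) E w P'"
  shows "recolour_stable V E w P"
  unfolding recolour_stable_def
proof (intro allI impI, elim conjE)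
  fix P0 v x a b
  assume P: "P = P0 + {#(v, b, x)#}" and a: "a \<in> {1..k}"
  define P' where "P' = P0 + {#(v, a, x)#}"
  have v: "v \<in> V" and b: "b \<in> {1..k}" and x: "admissible x"
    using inst by (auto simp: admissible_instance_def P)
  have inst': "admissible_instance V E w P'"
  proof -
    have "pendant_deg P' y = pendant_deg P y" for y by (simp add: P P'_def pendant_deg_def)
    thus ?thesis using inst a unfolding admissible_instance_def P'_def P by auto
  qed
  define d where "d = card (nbrs V E v)"
  define Y where "Y = Zdel V E w P v"
  define Q0 where "Q0 = pendants_at P0 v"
  define g where "g l = colour_prod Q0 l * Y l" for l
  have YY: "Zdel V E w P' v = Y" unfolding Y_def Zdel_def P P'_def by simp
  have QP: "pendants_at P v = add_mset (b, x) Q0" and QP': "pendants_at P' v = add_mset (a, x) Q0"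
    by (simp_all add: Q0_def pendants_at_def P P'_def)
  obtain \<psi> where Y: "balanced d Y \<psi>" unfolding Y_def d_def by (rule Zdel_balanced[OF inst v IH[OF v]])
  \<comment> \<open>the two partition functions differ only in the summands for colours a and b\<close>
  have zP: "Zpend V E w P = (\<Sum>l\<in>{1..k}. g l) + (x - 1) * g b"
    using Zpend_expand[OF inst v] sum_update_one[of "{1..k}" b x g] b
    by (simp add: QP colour_prod_add_mset g_def Y_def mult.assoc)
  have zP': "Zpend V E w P' = (\<Sum>l\<in>{1..k}. g l) + (x - 1) * g a"
    using Zpend_expand[OF inst' v] sum_update_one[of "{1..k}" a x g] a
    by (simp add: QP' colour_prod_add_mset g_def YY mult.assoc)
  have "cmod (Zpend V E w P' - Zpend V E w P) = cmod ((x - 1) * (g a - g b))"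
    unfolding zP zP' by (simp add: algebra_simps)
  also have "\<dots> \<le> K * (Min (cmod ` Y ` {1..k}) * denom d)"
    unfolding g_def
  proof (rule recolour_diff_bound[OF Y _ _ a b x])
    show "\<forall>q\<in>#Q0. admissible (snd q)"
      using pendants_at_admissible[OF inst, of v] QP by auto
    show "d + size Q0 + 1 \<le> \<Delta>" using degree_budget[OF inst v] QP by (simp add: d_def)
  qed
  also have "\<dots> \<le> K * cmod (Zpend V E w P)"
    using Zpend_lower_bound[OF inst v] Y K by (simp add: Y_def d_def)
  finally show "cmod (Zpend V E w (P0 + {#(v, a, x)#}) - Zpend V E w P) \<le> K * cmod (Zpend V E w P)"
    by (simp add: P'_def)
qed

theorem Zpend_nonzero_and_recolour_stable:
  "admissible_instance V E w P \<Longrightarrow> Zpend V E w P \<noteq> 0 \<and> recolour_stable V E w P"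
proof (induction "card V" arbitrary: V P rule: less_induct)
  case less
  show ?case
  proof (cases "V = {}")
    case True
    have "P = {#}"
    proof (rule ccontr)
      assume "P \<noteq> {#}"
      then obtain p where "p \<in># P" by (meson multiset_nonemptyE)
      hence "fst p \<in> V" using less.prems by (simp add: admissible_instance_def)
      thus False using True by simp
    qed
    hence "Zpend V E w P = 1" "recolour_stable V E w P"
      using True by (simp_all add: Zpend_def Zpin_def edge_prod_def pendant_prod_def edges_def
          recolour_stable_def PiE_empty_domain)
    thus ?thesis by simp
  next
    case False
    then obtain u where u: "u \<in> V" by auto
    have IH: "Zpend (V - {u'}) E w P' \<noteq> 0 \<and> recolour_stable (V - {u'}) E w P'"
      if "u' \<in> V" "admissible_instance (V - {u'}) E w P'" for u' P'
    proof (rule less.hyps)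
      show "card (V - {u'}) < card V"
        using less.prems that(1) unfolding admissible_instance_def by (meson card_Diff1_less)
    qed (use that in simp)
    show ?thesis
      using Zpend_nonzero_step[OF less.prems u IH[OF u]] recolour_stable_step[OF less.prems IH] by simp
  qed
qed

section \<open>The restricted partition function\<close>

lemma nonbad_eq_good_or_neutral:
  assumes sym: "\<forall>x y. E x y \<longrightarrow> E y x" and fin: "finite V" and FV: "set W \<subseteq> V" and u: "u \<in> V"
  shows "good_cols V E k W L u \<union> neutral_cols V E w \<epsilon> k W L u
           = nonbad (pendants_at (pendants_from V E w (set W) (fcol W L)) u)"
  unfolding neutral_cols_def good_cols_eq_absent[OF assms, where w = w] bad_cols_eq_small[OF assms] nonbad_def
  by (auto simp: not_less)

lemma admissible_instance_pinned:
  assumes G: "simple_graph V E" and deg: "max_deg_le V E \<Delta>" and wt: "\<forall>e\<in>edges V E. admissible (w e)"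
    and FV: "F \<subseteq> V" and indep: "\<forall>x\<in>F. \<forall>y\<in>F. \<not> E x y" and col: "\<forall>x\<in>F. c x \<in> {1..k}"
  shows "admissible_instance (V - F) E w (pendants_from V E w F c)"
proof -
  have fin: "finite V" and sym: "\<forall>x y. E x y \<longrightarrow> E y x" and irr: "\<forall>x. \<not> E x x"
    using G by (auto simp: simple_graph_def)
  have edge: "admissible (w {x, y})" if "x \<in> V" "y \<in> V" "E x y" for x y
    using that wt by (auto simp: edges_def)
  have "fst p \<in> V - F \<and> fst (snd p) \<in> {1..k} \<and> admissible (snd (snd p))"
    if p: "p \<in># pendants_from V E w F c" for p
  proof -
    obtain x v where xv: "x \<in> F" "v \<in> V" "E x v" "p = (v, c x, w {x, v})"
      using p unfolding mem_pendants_from[OF fin FV] by auto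
    hence "v \<notin> F" using indep by auto
    thus ?thesis using xv col edge[of x v] FV by auto
  qed
  moreover have "card (nbrs (V - F) E v) + pendant_deg (pendants_from V E w F c) v \<le> \<Delta>" if "v \<in> V - F" for v
  proof -
    have "nbrs (V - F) E v = nbrs V E v - F" by (auto simp: nbrs_def)
    moreover have "finite (nbrs V E v)" using fin by (simp add: nbrs_def)
    ultimately have "card (nbrs (V - F) E v) + card (nbrs V E v \<inter> F) = card (nbrs V E v)"
      by (metis card_Int_Diff add.commute)
    moreover have "card (nbrs V E v) \<le> \<Delta>" using deg that by (auto simp: max_deg_le_def)
    ultimately show ?thesis using pendant_deg_pendants_from[OF fin FV sym, of v w c] that by simp
  qed
  ultimately show ?thesis
    using fin sym irr edge unfolding admissible_instance_def by simp
qed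

lemma Zr_eq_Zpend:
  assumes G: "simple_graph V E" and W: "distinct W" "leaf_independent V E (set W)"
    and L: "length L = length W" "set L \<subseteq> {1..k}"
  shows "Zr V E w k W L = Zpend (V - set W) E w (pendants_from V E w (set W) (fcol W L))"
proof -
  have fin: "finite V" and sym: "\<forall>x y. E x y \<longrightarrow> E y x" using G by (auto simp: simple_graph_def)
  have FV: "set W \<subseteq> V" and indep: "\<forall>x\<in>set W. \<forall>y\<in>set W. \<not> E x y"
    using W by (auto simp: leaf_independent_def)
  have "Zr V E w k W L = Zpin V E w k {#} (set W) (fcol W L)" by (rule Zr_eq_Zpin[OF W(1) L(1)])
  also have "\<dots> = pendant_prod (filter_mset (\<lambda>p. fst p \<in> set W) {#}) (fcol W L) *
      Zpin (V - set W) E w k (filter_mset (\<lambda>p. fst p \<notin> set W) {#} + pendants_from V E w (set W) (fcol W L))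
        (set W - set W) (fcol W L)"
    by (rule Zpin_remove_independent[OF fin FV subset_refl indep sym fcol_in_colours[OF W(1) L]]) simp
  also have "\<dots> = Zpin (V - set W) E w k (pendants_from V E w (set W) (fcol W L)) {} (fcol W L)"
    by (simp add: pendant_prod_def)
  also have "\<dots> = Zpend (V - set W) E w (pendants_from V E w (set W) (fcol W L))"
    unfolding Zpend_def by (rule Zpin_cong) simp
  finally show ?thesis .
qed

lemma cangle_le_theta_if_close:
  assumes "z' \<noteq> 0" and close: "cmod (z - z') \<le> K * cmod z'"
  shows "cangle z z' \<le> \<theta>" "cmod z / cmod z' \<le> 1 + K"
proof -
  obtain \<rho> \<sigma> where q: "z = z' * rcis \<rho> \<sigma>" "0 < \<rho>" "\<rho> \<le> 1 + K" "\<bar>\<sigma>\<bar> \<le> arcsin K"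
    using relative_error_polar[OF K assms] .
  have "z = rcis (cmod z' * \<rho>) (Arg z' + \<sigma>)" using q(1) by (metis rcis_cmod_Arg rcis_mult)
  moreover have "\<bar>\<sigma>\<bar> \<le> pi" using q(4) theta_def theta_lt_pi3 by simp
  ultimately have "cangle z z' = \<bar>(Arg z' + \<sigma>) - Arg z'\<bar>"
    using cangle_rcis[of "cmod z' * \<rho>" "cmod z'" "Arg z' + \<sigma>" "Arg z'"] q(2) assms(1)
    by (simp add: rcis_cmod_Arg)
  thus "cangle z z' \<le> \<theta>" using q(4) theta_def by simp
  show "cmod z / cmod z' \<le> 1 + K" using q assms(1) by (simp add: norm_mult)
qed

lemma Zr_nonzero:
  assumes G: "simple_graph V E" and deg: "max_deg_le V E \<Delta>" and wt: "\<forall>e\<in>edges V E. admissible (w e)"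
    and W: "distinct W" "leaf_independent V E (set W)" and L: "length L = length W" "set L \<subseteq> {1..k}"
  shows "Zr V E w k W L \<noteq> 0"
proof -
  have "set W \<subseteq> V" "\<forall>x\<in>set W. \<forall>y\<in>set W. \<not> E x y" using W(2) by (auto simp: leaf_independent_def)
  from admissible_instance_pinned[OF G deg wt this fcol_in_colours[OF W(1) L]]
  have "Zpend (V - set W) E w (pendants_from V E w (set W) (fcol W L)) \<noteq> 0"
    by (rule conjunct1[OF Zpend_nonzero_and_recolour_stable])
  thus ?thesis using Zr_eq_Zpend[OF G W L] by simp
qed

lemma Zr_recolour_leaf:
  assumes G: "simple_graph V E" and deg: "max_deg_le V E \<Delta>" and wt: "\<forall>e\<in>edges V E. admissible (w e)"
    and W: "distinct (W' @ [u])" "leaf_independent V E (set (W' @ [u]))"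
    and L: "length L' = length W'" "set L' \<subseteq> {1..k}" and l: "l \<in> {1..k}" "l' \<in> {1..k}"
  shows "cangle (Zr V E w k (W' @ [u]) (L' @ [l])) (Zr V E w k (W' @ [u]) (L' @ [l'])) \<le> \<theta>"
    "cmod (Zr V E w k (W' @ [u]) (L' @ [l])) / cmod (Zr V E w k (W' @ [u]) (L' @ [l'])) \<le> 1 + K"
proof -
  have fin: "finite V" using G by (simp add: simple_graph_def)
  have uW: "u \<notin> set W'" using W(1) by simp
  have FV: "set (W' @ [u]) \<subseteq> V" and indep: "\<forall>x\<in>set (W' @ [u]). \<forall>y\<in>set (W' @ [u]). \<not> E x y"
    and deg_u: "card (nbrs V E u) = 1" using W(2) by (auto simp: leaf_independent_def)
  obtain v where v: "nbrs V E u = {v}" using deg_u card_1_singleton_iff by (metis One_nat_def)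
  define V0 where "V0 = V - set (W' @ [u])"
  define P0 where "P0 = pendants_from V E w (set W') (fcol W' L')"
  \<comment> \<open>the colour of the leaf u only enters through the single pendant it leaves on v\<close>
  have Zr_eq: "Zr V E w k (W' @ [u]) (L' @ [m]) = Zpend V0 E w (P0 + {#(v, m, w {u, v})#})"
    and inst: "admissible_instance V0 E w (P0 + {#(v, m, w {u, v})#})" if m: "m \<in> {1..k}" for m
  proof -
    have LL: "length (L' @ [m]) = length (W' @ [u])" "set (L' @ [m]) \<subseteq> {1..k}" using L m by auto
    have "pendants_from V E w (set W') (fcol (W' @ [u]) (L' @ [m])) = P0"
      unfolding P0_def by (rule pendants_from_cong) (use fcol_snoc(1)[OF L(1) uW] in auto)
    hence P: "pendants_from V E w (set (W' @ [u])) (fcol (W' @ [u]) (L' @ [m])) = P0 + {#(v, m, w {u, v})#}"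
      using pendants_from_insert[OF fin _ uW v, of w "fcol (W' @ [u]) (L' @ [m])"] FV
        fcol_snoc(2)[OF L(1) uW] by simp
    show "Zr V E w k (W' @ [u]) (L' @ [m]) = Zpend V0 E w (P0 + {#(v, m, w {u, v})#})"
      using Zr_eq_Zpend[OF G W LL] P by (simp add: V0_def)
    show "admissible_instance V0 E w (P0 + {#(v, m, w {u, v})#})"
      using admissible_instance_pinned[OF G deg wt FV indep fcol_in_colours[OF W(1) LL]] P
      by (simp add: V0_def)
  qed
  have nz: "Zpend V0 E w (P0 + {#(v, l', w {u, v})#}) \<noteq> 0"
    by (rule conjunct1[OF Zpend_nonzero_and_recolour_stable[OF inst[OF l(2)]]])
  have "recolour_stable V0 E w (P0 + {#(v, l', w {u, v})#})"
    by (rule conjunct2[OF Zpend_nonzero_and_recolour_stable[OF inst[OF l(2)]]])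
  hence "cmod (Zpend V0 E w (P0 + {#(v, l, w {u, v})#}) - Zpend V0 E w (P0 + {#(v, l', w {u, v})#}))
      \<le> K * cmod (Zpend V0 E w (P0 + {#(v, l', w {u, v})#}))"
    using l(1) unfolding recolour_stable_def by simp
  from cangle_le_theta_if_close[OF nz this]
  show "cangle (Zr V E w k (W' @ [u]) (L' @ [l])) (Zr V E w k (W' @ [u]) (L' @ [l'])) \<le> \<theta>"
    "cmod (Zr V E w k (W' @ [u]) (L' @ [l])) / cmod (Zr V E w k (W' @ [u]) (L' @ [l'])) \<le> 1 + K"
    unfolding Zr_eq[OF l(1)] Zr_eq[OF l(2)] .
qed

lemma Zr_snoc_eq_Zdel:
  assumes G: "simple_graph V E" and deg: "max_deg_le V E \<Delta>" and wt: "\<forall>e\<in>edges V E. admissible (w e)"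
    and W: "distinct (W' @ [u])" "leaf_independent V E (set W')" and u: "u \<in> V"
    and L: "length L' = length W'" "set L' \<subseteq> {1..k}" and l: "l \<in> {1..k}"
  defines "P \<equiv> pendants_from V E w (set W') (fcol W' L')"
  shows "Zr V E w k (W' @ [u]) (L' @ [l]) = colour_prod (pendants_at P u) l * Zdel (V - set W') E w P u l"
proof -
  have fin: "finite V" and sym: "\<forall>x y. E x y \<longrightarrow> E y x" using G by (auto simp: simple_graph_def)
  have uW: "u \<notin> set W'" and dW: "distinct W'" using W(1) by auto
  have FV: "set W' \<subseteq> V" and indep: "\<forall>x\<in>set W'. \<forall>y\<in>set W'. \<not> E x y"
    using W(2) by (auto simp: leaf_independent_def)
  define col where "col = fcol (W' @ [u]) (L' @ [l])"
  have col_W: "col x = fcol W' L' x" if "x \<in> set W'" for x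
    using fcol_snoc(1)[OF L(1) uW that] by (simp add: col_def)
  have "Zr V E w k (W' @ [u]) (L' @ [l]) = Zpin V E w k {#} (set (W' @ [u])) col"
    unfolding col_def by (rule Zr_eq_Zpin) (use W(1) L(1) in auto)
  also have "\<dots> = pendant_prod (filter_mset (\<lambda>p. fst p \<in> set W') {#}) col *
      Zpin (V - set W') E w k (filter_mset (\<lambda>p. fst p \<notin> set W') {#} + pendants_from V E w (set W') col)
        (set (W' @ [u]) - set W') col"
    using fcol_in_colours[OF dW L] col_W
    by (intro Zpin_remove_independent[OF fin FV _ indep sym]) auto
  also have "\<dots> = Zpin (V - set W') E w k P {u} (\<lambda>_. l)"
  proof -
    have "pendants_from V E w (set W') col = P"
      unfolding P_def by (rule pendants_from_cong) (simp add: col_W)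
    moreover have "set (W' @ [u]) - set W' = {u}" using uW by auto
    moreover have "Zpin (V - set W') E w k P {u} col = Zpin (V - set W') E w k P {u} (\<lambda>_. l)"
      by (rule Zpin_cong) (simp add: col_def fcol_snoc(2)[OF L(1) uW])
    ultimately show ?thesis by (simp add: pendant_prod_def)
  qed
  also have "\<dots> = colour_prod (pendants_at P u) l * Zdel (V - set W') E w P u l"
    unfolding P_def
    using admissible_instance_pinned[OF G deg wt FV indep fcol_in_colours[OF dW L]] u uW l
    by (intro Zpin_pin_vertex) auto
  finally show ?thesis .
qed

lemma colour_prod_pinned_le_eps_power:
  assumes G: "simple_graph V E" and wt: "\<forall>e\<in>edges V E. admissible (w e)"
    and FV: "set W \<subseteq> V" and u: "u \<in> V"
  shows "cmod (colour_prod (pendants_at (pendants_from V E w (set W) (fcol W L)) u) l)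
           \<le> \<epsilon> ^ mbad V E w \<epsilon> W L u l"
proof -
  have fin: "finite V" and sym: "\<forall>x y. E x y \<longrightarrow> E y x" using G by (auto simp: simple_graph_def)
  define A where "A = {x\<in>set W. E x u}"
  have "finite A" using finite_subset[OF FV fin] by (simp add: A_def)
  have "cmod (w {x, u}) \<le> 1" if "x \<in> A" for x
  proof -
    have "{x, u} \<in> edges V E" using that FV u by (auto simp: A_def edges_def)
    thus ?thesis using wt admissible_norm_le_one by blast
  qed
  moreover have "mbad V E w \<epsilon> W L u l = card {x\<in>A. fcol W L x = l \<and> cmod (w {x, u}) \<le> \<epsilon>}"
  proof -
    have "E u v \<longleftrightarrow> E v u" for v using sym by blast
    hence "{v \<in> set W. E u v \<and> cmod (w {u, v}) \<le> \<epsilon> \<and> fcol W L v = l}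
        = {x\<in>A. fcol W L x = l \<and> cmod (w {x, u}) \<le> \<epsilon>}"
      by (auto simp: A_def insert_commute)
    thus ?thesis by (simp add: mbad_def)
  qed
  ultimately show ?thesis
    unfolding pendants_at_pendants_from[OF fin FV u] colour_prod_image_mset_set[OF \<open>finite A\<close>]
      A_def[symmetric]
    using norm_prod_if_le_eps_power[OF \<open>finite A\<close>, where z = "\<lambda>x. w {x, u}" and c = "fcol W L"] eps
    by simp
qed

text \<open>Pinning the leaf-independent set W' reduces the situation at u to that of the
  induction: u carries the pendants Q of its fixed neighbours, and the values Y l of the
  graph without u are balanced.\<close>

lemma Zr_snoc_factorisation:
  assumes G: "simple_graph V E" and deg: "max_deg_le V E \<Delta>" and wt: "\<forall>e\<in>edges V E. admissible (w e)"
    and W: "distinct (W' @ [u])" "leaf_independent V E (set W')" and u: "u \<in> V"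
    and L: "length L' = length W'" "set L' \<subseteq> {1..k}"
  obtains Q Y \<psi> where
    "\<And>l. l \<in> {1..k} \<Longrightarrow> Zr V E w k (W' @ [u]) (L' @ [l]) = colour_prod Q l * Y l"
    "balanced (free_deg V E W' u) Y \<psi>" "\<forall>q\<in>#Q. admissible (snd q)" "free_deg V E W' u + size Q \<le> \<Delta>"
    "good_cols V E k W' L' u = {l \<in> {1..k}. \<forall>q\<in>#Q. fst q \<noteq> l}"
    "good_cols V E k W' L' u \<union> neutral_cols V E w \<epsilon> k W' L' u = nonbad Q"
    "\<And>l. cmod (colour_prod Q l) \<le> \<epsilon> ^ mbad V E w \<epsilon> W' L' u l"
proof -
  have fin: "finite V" and sym: "\<forall>x y. E x y \<longrightarrow> E y x" using G by (auto simp: simple_graph_def)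
  have uW: "u \<notin> set W'" and dW: "distinct W'" using W(1) by auto
  have FV: "set W' \<subseteq> V" and indep: "\<forall>x\<in>set W'. \<forall>y\<in>set W'. \<not> E x y"
    using W(2) by (auto simp: leaf_independent_def)
  define P where "P = pendants_from V E w (set W') (fcol W' L')"
  have inst: "admissible_instance (V - set W') E w P"
    unfolding P_def by (rule admissible_instance_pinned[OF G deg wt FV indep fcol_in_colours[OF dW L]])
  have uV': "u \<in> V - set W'" using u uW by simp
  have d: "free_deg V E W' u = card (nbrs (V - set W') E u)"
    unfolding free_deg_def by (rule arg_cong[where f = card]) (auto simp: nbrs_def)
  obtain \<psi> where "balanced (free_deg V E W' u) (Zdel (V - set W') E w P u) \<psi>"
    using Zdel_balanced[OF inst uV'] Zpend_nonzero_and_recolour_stable unfolding d by metis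
  moreover have "free_deg V E W' u + size (pendants_at P u) \<le> \<Delta>"
    using degree_budget[OF inst uV'] d by simp
  ultimately show thesis
  proof (intro that[of "pendants_at P u" "Zdel (V - set W') E w P u"])
    show "Zr V E w k (W' @ [u]) (L' @ [l]) = colour_prod (pendants_at P u) l * Zdel (V - set W') E w P u l"
      if "l \<in> {1..k}" for l
      unfolding P_def by (rule Zr_snoc_eq_Zdel[OF G deg wt W u L that])
    show "\<forall>q\<in>#pendants_at P u. admissible (snd q)" by (rule pendants_at_admissible[OF inst])
    show "good_cols V E k W' L' u = {l \<in> {1..k}. \<forall>q\<in>#pendants_at P u. fst q \<noteq> l}"
      unfolding P_def by (rule good_cols_eq_absent[OF sym fin FV u])
    show "good_cols V E k W' L' u \<union> neutral_cols V E w \<epsilon> k W' L' u = nonbad (pendants_at P u)"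
      unfolding P_def by (rule nonbad_eq_good_or_neutral[OF sym fin FV u])
    show "cmod (colour_prod (pendants_at P u) l) \<le> \<epsilon> ^ mbad V E w \<epsilon> W' L' u l" for l
      unfolding P_def by (rule colour_prod_pinned_le_eps_power[OF G wt FV u])
  qed
qed

lemma Zr_snoc_bounds:
  assumes G: "simple_graph V E" and deg: "max_deg_le V E \<Delta>" and wt: "\<forall>e\<in>edges V E. admissible (w e)"
    and W: "distinct (W' @ [u])" "leaf_independent V E (set W')" and u: "u \<in> V"
    and L: "length L' = length W'" "set L' \<subseteq> {1..k}"
  defines "d \<equiv> free_deg V E W' u"
    and "GN \<equiv> good_cols V E k W' L' u \<union> neutral_cols V E w \<epsilon> k W' L' u"
    and "Z \<equiv> \<lambda>l. Zr V E w k (W' @ [u]) (L' @ [l])"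
  shows "\<forall>l\<in>GN. Z l \<noteq> 0"
    "\<forall>l\<in>GN. \<forall>l'\<in>GN. cangle (Z l) (Z l') \<le> cone_angle d"
    "\<forall>l\<in>{1..k}. \<forall>j\<in>good_cols V E k W' L' u. cmod (Z l) / cmod (Z j) \<le> \<epsilon> ^ mbad V E w \<epsilon> W' L' u l * (1 + K) ^ d"
proof -
  obtain Q Y \<psi> where Z0: "\<And>l. l \<in> {1..k} \<Longrightarrow> Zr V E w k (W' @ [u]) (L' @ [l]) = colour_prod Q l * Y l"
    and Y: "balanced (free_deg V E W' u) Y \<psi>" and Qa: "\<forall>q\<in>#Q. admissible (snd q)"
    and dQ: "free_deg V E W' u + size Q \<le> \<Delta>"
    and good: "good_cols V E k W' L' u = {l \<in> {1..k}. \<forall>q\<in>#Q. fst q \<noteq> l}"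
    and GN0: "good_cols V E k W' L' u \<union> neutral_cols V E w \<epsilon> k W' L' u = nonbad Q"
    and small: "\<And>l. cmod (colour_prod Q l) \<le> \<epsilon> ^ mbad V E w \<epsilon> W' L' u l"
    using Zr_snoc_factorisation[OF G deg wt W u L] by blast
  note Y = Y[folded d_def] and dQ = dQ[folded d_def]
  have Zc: "Z l = colour_prod Q l * Y l" if "l \<in> {1..k}" for l using Z0[OF that] by (simp add: Z_def)
  have Z: "Z l = colour_prod Q l * Y l" if "l \<in> nonbad Q" for l
    using Zc that by (simp add: nonbad_def)
  have GN: "l \<in> GN \<longleftrightarrow> l \<in> nonbad Q" for l by (simp add: GN_def GN0)
  obtain \<alpha> where \<alpha>0: "\<And>l. l \<in> nonbad Q \<Longrightarrow>
      colour_prod Q l * Y l = rcis (cmod (colour_prod Q l * Y l)) (\<alpha> l) \<and> colour_prod Q l * Y l \<noteq> 0"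
    and \<alpha>_close: "\<And>l l'. l \<in> nonbad Q \<Longrightarrow> l' \<in> nonbad Q \<Longrightarrow> \<bar>\<alpha> l - \<alpha> l'\<bar> \<le> cone_angle d"
    using nonbad_terms_polar[OF Y Qa dQ] by blast
  have \<alpha>: "Z l = rcis (cmod (Z l)) (\<alpha> l) \<and> Z l \<noteq> 0" if "l \<in> nonbad Q" for l
    using \<alpha>0[OF that] Z[OF that] by simp
  show "\<forall>l\<in>GN. Z l \<noteq> 0" using \<alpha> by (simp add: GN)
  show "\<forall>l\<in>GN. \<forall>l'\<in>GN. cangle (Z l) (Z l') \<le> cone_angle d"
  proof (intro ballI)
    fix l l' assume "l \<in> GN" "l' \<in> GN"
    hence l: "l \<in> nonbad Q" "l' \<in> nonbad Q" by (simp_all add: GN)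
    have "cangle (rcis (cmod (Z l)) (\<alpha> l)) (rcis (cmod (Z l')) (\<alpha> l')) = \<bar>\<alpha> l - \<alpha> l'\<bar>"
      using \<alpha>[OF l(1)] \<alpha>[OF l(2)] \<alpha>_close[OF l] cone_angle_le_pi[of d] dQ
      by (intro cangle_rcis) auto
    thus "cangle (Z l) (Z l') \<le> cone_angle d" using \<alpha>[OF l(1)] \<alpha>[OF l(2)] \<alpha>_close[OF l] by simp
  qed
  show "\<forall>l\<in>{1..k}. \<forall>j\<in>good_cols V E k W' L' u. cmod (Z l) / cmod (Z j) \<le> \<epsilon> ^ mbad V E w \<epsilon> W' L' u l * (1 + K) ^ d"
  proof (intro ballI)
    fix l j assume l: "l \<in> {1..k}" and "j \<in> good_cols V E k W' L' u"
    hence j: "j \<in> {1..k}" "\<forall>q\<in>#Q. fst q \<noteq> j" by (simp_all add: good)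
    have "cmod (Y l) / cmod (Y j) \<le> (1 + K) ^ d"
      using Y l j(1) by (auto simp: balanced_def divide_le_eq)
    hence "cmod (colour_prod Q l) * (cmod (Y l) / cmod (Y j)) \<le> \<epsilon> ^ mbad V E w \<epsilon> W' L' u l * (1 + K) ^ d"
      using small[of l] K eps by (intro mult_mono) auto
    thus "cmod (Z l) / cmod (Z j) \<le> \<epsilon> ^ mbad V E w \<epsilon> W' L' u l * (1 + K) ^ d"
      using Zc[OF l] Zc[OF j(1)] colour_prod_absent[OF j(2)] by (simp add: norm_mult)
  qed
qed

end

theorem theorem5p1:
  fixes \<Delta> k :: nat and \<epsilon> K \<theta> :: real
    and V :: "'a set" and E :: "'a \<Rightarrow> 'a \<Rightarrow> bool" and w :: "'a set \<Rightarrow> complex"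
  assumes Delta: "\<Delta> \<ge> 3"
    and k_gt: "k > \<Delta>"
    and eps: "0 < \<epsilon>" "\<epsilon> < 1"
    and K: "0 < K" "K < 1"
    and theta_def: "\<theta> = arcsin K"
    and theta_range: "0 < \<theta>" "\<theta> < pi / (3 * (real \<Delta> - 1 + \<epsilon>))"
    and cond1: "\<And>d. d \<le> \<Delta> - 2 \<Longrightarrow>
        (let b = real \<Delta> - real d;
             den = cos ((real d + b * \<epsilon>) * \<theta> / 2) * (real k - b) - \<epsilon> * b * (1 + K) ^ d
         in den \<noteq> 0 \<and> (1 + \<epsilon>)\<^sup>2 * (1 + K) ^ d / den \<le> K)"
    and cond2: "\<And>d. d \<le> \<Delta> - 1 \<Longrightarrow>
        (let b = real \<Delta> - real d;
             den = cos ((real d + b * \<epsilon>) * \<theta> / 2) * (real k - b) - \<epsilon> * b * (1 + K) ^ d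
         in den \<noteq> 0 \<and> fbound d K ((real d + b * \<epsilon>) * \<theta>) \<noteq> 0 \<and>
            (1 + \<epsilon>) * (1 + K) ^ d / den \<le> K / fbound d K ((real d + b * \<epsilon>) * \<theta>))"
    and G: "simple_graph V E"
    and deg: "max_deg_le V E \<Delta>"
    and weights: "\<forall>e \<in> edges V E. cmod (w e) \<le> \<epsilon> \<or>
                    (\<bar>Arg (w e)\<bar> \<le> \<epsilon> * \<theta> \<and> \<epsilon> < cmod (w e) \<and> cmod (w e) \<le> 1)"
  shows
    "(\<forall>W L. distinct W \<and> leaf_independent V E (set W) \<and> length L = length W
            \<and> set L \<subseteq> {1..k} \<longrightarrow> Zr V E w k W L \<noteq> 0)
   \<and> (\<forall>W' u L' l l'. distinct (W' @ [u]) \<and> leaf_independent V E (set (W' @ [u]))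
            \<and> length L' = length W' \<and> set L' \<subseteq> {1..k} \<and> l \<in> {1..k} \<and> l' \<in> {1..k} \<longrightarrow>
            cangle (Zr V E w k (W' @ [u]) (L' @ [l])) (Zr V E w k (W' @ [u]) (L' @ [l'])) \<le> \<theta>
          \<and> cmod (Zr V E w k (W' @ [u]) (L' @ [l])) / cmod (Zr V E w k (W' @ [u]) (L' @ [l']))
              \<le> 1 + K)
   \<and> (\<forall>W' u L'. distinct (W' @ [u]) \<and> u \<in> V \<and> leaf_independent V E (set W')
            \<and> length L' = length W' \<and> set L' \<subseteq> {1..k} \<longrightarrow>
         (let d = free_deg V E W' u;
              b = real \<Delta> - real d;
              GN = good_cols V E k W' L' u \<union> neutral_cols V E w \<epsilon> k W' L' u
          in (\<forall>l \<in> GN. Zr V E w k (W' @ [u]) (L' @ [l]) \<noteq> 0)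
           \<and> (\<forall>l \<in> GN. \<forall>l' \<in> GN.
                cangle (Zr V E w k (W' @ [u]) (L' @ [l])) (Zr V E w k (W' @ [u]) (L' @ [l']))
                  \<le> (real d + b * \<epsilon>) * \<theta>)
           \<and> (\<forall>l \<in> {1..k}. \<forall>j \<in> good_cols V E k W' L' u.
                cmod (Zr V E w k (W' @ [u]) (L' @ [l])) / cmod (Zr V E w k (W' @ [u]) (L' @ [j]))
                  \<le> \<epsilon> ^ mbad V E w \<epsilon> W' L' u l * (1 + K) ^ d)))"
proof -
  interpret zero_free_parameters \<Delta> k \<epsilon> K \<theta>
    using Delta k_gt eps K theta_def theta_range cond1 cond2 by unfold_locales
  have wt: "\<forall>e\<in>edges V E. admissible (w e)" using weights by (simp add: admissible_def)
  show ?thesis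
    unfolding Let_def cone_angle_def[symmetric]
    by (intro conjI allI impI; elim conjE;
        rule Zr_nonzero[OF G deg wt] Zr_recolour_leaf[OF G deg wt] Zr_snoc_bounds[OF G deg wt];
        assumption)
qed

end
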